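(* Let $\alpha,\beta\in(0,1]$ and let $E$ be an $F^+_{\alpha\beta}$-set. Let $\theta>\frac{1+2\alpha}{2\alpha}$ and let $h\in\mathbb{H}$ satisfy $h(x)\ge C\,x^{\frac{\beta}{2}+\alpha}\log^{\theta}(1/x)$ for some constant $C>0$ and all sufficiently small $x>0$. Then $\mathcal{H}^h(E)>0$.
   Context: $\mathbb{H}$ is the class of non-decreasing, right continuous functions $h:[0,\infty)\to[0,\infty)$ with $h(0)=0$. For $h\in\mathbb{H}$, $\mathcal{H}^h$ is the $h$-dimensional Hausdorff measure: $\mathcal{H}^h(F)=\sup_{\delta>0}\inf\{\sum_i h(\mathrm{diam}(F_i)): F\subseteq\bigcup_i F_i,\ \mathrm{diam}(F_i)<\delta\}$; $\mathcal{H}^s$ denotes $\mathcal{H}^{h}$ with $h(x)=x^s$. $\mathbb{S}$ is the unit circle. For $\alpha,\beta\in(0,1]$, $E\subseteq\mathbb{R}^2$ is an $F^+_{\alpha\beta}$-set if there is $L\subseteq\mathbb{S}$ with $\mathcal{H}^{\beta}(L)>0$ such that for each $e\in L$ there is a line segment $\ell_e$ in direction $e$ with $\mathcal{H}^{\alpha}(\ell_e\cap E)>0$. *)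

theory Defs
  imports "HOL-Analysis.Analysis"
begin

text \<open>The gauge class H: non-decreasing, right continuous functions
  h : [0,\<infinity>) \<rightarrow> [0,\<infinity>) with h 0 = 0 (only values on [0,\<infinity>) matter).\<close>
definition gauge_class :: "(real \<Rightarrow> real) set" where
  "gauge_class = {h. mono_on {0..} h \<and> (\<forall>x\<ge>0. h x \<ge> 0) \<and> h 0 = 0 \<and>
                     (\<forall>x\<ge>0. continuous (at_right x) h)}"

text \<open>Sets of finite diameter are exactly the bounded sets;
  boundedness is required explicitly because the library diameter is only meaningful
  for bounded sets.\<close>
definition hausdorff_h :: "(real \<Rightarrow> real) \<Rightarrow> 'a::metric_space set \<Rightarrow> ennreal" where
  "hausdorff_h h F =
     (SUP \<delta>\<in>{0<..}. INF U\<in>{U :: nat \<Rightarrow> 'a set. F \<subseteq> (\<Union>i. U i) \<and>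
                         (\<forall>i. bounded (U i) \<and> diameter (U i) < \<delta>)}.
                 (\<Sum>i. ennreal (h (diameter (U i)))))"

definition F_plus :: "real \<Rightarrow> real \<Rightarrow> (real^2) set \<Rightarrow> bool" where
  "F_plus \<alpha> \<beta> E \<longleftrightarrow>
     (\<exists>L \<subseteq> sphere (0::real^2) 1. hausdorff_h (\<lambda>x. x powr \<beta>) L > 0 \<and>
        (\<forall>e\<in>L. \<exists>a t. t > 0 \<and>
            hausdorff_h (\<lambda>x. x powr \<alpha>) (closed_segment a (a + t *\<^sub>R e) \<inter> E) > 0))"

end

theory Submission
  imports Defs
begin

(* Suppose H^h(E) = 0.  By the F^+ hypothesis there is a set M of directions with
   H^beta_infinity(M) > 0 such that for each e in M a segment S_e in direction e meets E
   in a set of alpha-content > c0.  Cover E by pieces U_i of small diameter and small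
   total cost sum h(diam U_i), and sort the pieces by dyadic level k (diameter about
   2^-k).  With summable thresholds t_k = c (k+1)^-gamma, gamma = theta/(1 + 1/(2 alpha)) > 1,
   every direction is "captured" at some level k: the level-k pieces carry content t_k of
   S_e.  At a fixed level a Kakeya-type incidence count (split each captured part of a
   segment into two far apart halves, count pairs of pieces per direction cell of size
   2^-k) bounds the beta-content of the captured directions by the number of level-k
   pieces times h(2^-k-1), using the lower bound on h.  Summing over levels gives
   kappa * H^beta_infinity(M) <= sum h(diam U_i), contradicting the smallness of the cover. *)

text \<open>It is countably
  subadditive, positive wherever the Hausdorff measure \<open>\<H>\<^sup>a\<close> is, and finite on bounded
  sets, which makes it the convenient quantity to count with.\<close>
definition hcontent :: "real \<Rightarrow> 'a::metric_space set \<Rightarrow> ennreal" where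
  "hcontent a A = (INF U\<in>{U::nat \<Rightarrow> 'a set. A \<subseteq> (\<Union>i. U i) \<and> (\<forall>i. bounded (U i))}.
     \<Sum>i. ennreal (diameter (U i) powr a))"

lemma ennreal_term_le_suminf: "(f::nat \<Rightarrow> ennreal) i \<le> suminf f"
  using sum_le_suminf[of f "{i}"] by auto

lemma hcontent_le_cover:
  assumes "A \<subseteq> (\<Union>i. U i)" "\<And>i. bounded (U i)"
  shows "hcontent a A \<le> (\<Sum>i. ennreal (diameter (U i) powr a))"
  unfolding hcontent_def using assms by (intro INF_lower) auto

lemma hcontent_mono: "A \<subseteq> B \<Longrightarrow> hcontent a A \<le> hcontent a B"
  unfolding hcontent_def by (rule INF_superset_mono) auto

lemma hcontent_le_finite_cover:
  assumes "finite F" "A \<subseteq> (\<Union>x\<in>F. S x)" "\<And>x. x \<in> F \<Longrightarrow> bounded (S x)"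
  shows "hcontent a A \<le> (\<Sum>x\<in>F. ennreal (diameter (S x) powr a))"
proof -
  obtain g where g: "bij_betw g {..<card F} F"
    using ex_bij_betw_nat_finite[OF assms(1)] by (auto simp: atLeast0LessThan)
  define U where "U i = (if i < card F then S (g i) else {})" for i
  have "A \<subseteq> (\<Union>i. U i)"
  proof
    fix x assume "x \<in> A"
    then obtain y where y: "y \<in> F" "x \<in> S y" using assms(2) by blast
    then obtain i where "i < card F" "g i = y" using g unfolding bij_betw_def by force
    then show "x \<in> (\<Union>i. U i)" using y unfolding U_def by auto
  qed
  moreover have "bounded (U i)" for i
  proof (cases "i < card F")
    case True
    then have "g i \<in> F" using g by (auto simp: bij_betw_def)
    then show ?thesis using True assms(3) by (simp add: U_def)
  qed (simp add: U_def)
  ultimately have "hcontent a A \<le> (\<Sum>i. ennreal (diameter (U i) powr a))"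
    by (rule hcontent_le_cover)
  also have "\<dots> = (\<Sum>i<card F. ennreal (diameter (S (g i)) powr a))"
    by (subst suminf_finite[of "{..<card F}"]) (auto simp: U_def)
  also have "\<dots> = (\<Sum>x\<in>F. ennreal (diameter (S x) powr a))"
    using sum.reindex_bij_betw[OF g, of "\<lambda>x. ennreal (diameter (S x) powr a)"] by simp
  finally show ?thesis .
qed

lemma hcontent_le_diameter:
  assumes "bounded A"
  shows "hcontent a A \<le> ennreal (diameter A powr a)"
  using hcontent_le_finite_cover[of "{()}" A "\<lambda>_. A" a] assms by auto

lemma hcontent_empty [simp]: "hcontent a {} = 0"
  using hcontent_le_diameter[of "{}" a] by simp

lemma hcontent_near_optimal_cover:
  assumes "hcontent a A < top" "0 < e"
  obtains U where "A \<subseteq> (\<Union>i. U i)" "\<And>i. bounded (U i)"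
    "(\<Sum>i. ennreal (diameter (U i) powr a)) < hcontent a A + ennreal e"
proof -
  obtain x where x: "hcontent a A = ennreal x" "0 \<le> x"
    using assms(1) by (cases "hcontent a A") auto
  have "ennreal x < ennreal (x + e)" using assms(2) x(2) by (subst ennreal_less_iff) auto
  then have "hcontent a A < hcontent a A + ennreal e" using assms(2) x by (simp flip: ennreal_plus)
  then show ?thesis using that unfolding hcontent_def[of a A] INF_less_iff by auto
qed

text \<open>Countable subadditivity: cover each \<open>A n\<close> up to an error \<open>e/2\<^sup>n\<^sup>+\<^sup>1\<close> and
  merge the countably many covers into one via \<open>prod_decode\<close>.\<close>
lemma hcontent_Union: "hcontent a (\<Union>n. A n) \<le> (\<Sum>n. hcontent a (A n))"
proof (rule ennreal_le_epsilon)
  fix e :: real assume fin: "(\<Sum>n. hcontent a (A n)) < top" and e: "0 < e"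
  have "\<exists>U. (A n \<subseteq> (\<Union>i. U i) \<and> (\<forall>i. bounded (U i))) \<and>
          (\<Sum>i. ennreal (diameter (U i) powr a)) < hcontent a (A n) + ennreal (e / 2 ^ Suc n)" for n
  proof -
    have "hcontent a (A n) < top"
      using ennreal_term_le_suminf[of "\<lambda>n. hcontent a (A n)" n] fin by simp
    then obtain U where "A n \<subseteq> (\<Union>i. U i)" "\<And>i. bounded (U i)"
      "(\<Sum>i. ennreal (diameter (U i) powr a)) < hcontent a (A n) + ennreal (e / 2 ^ Suc n)"
      by (rule hcontent_near_optimal_cover[of a "A n" "e / 2 ^ Suc n"]) (use e in simp, blast)
    then show ?thesis by blast
  qed
  then obtain U where U: "\<And>n. A n \<subseteq> (\<Union>i. U n i)" "\<And>n i. bounded (U n i)"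
     "\<And>n. (\<Sum>i. ennreal (diameter (U n i) powr a)) < hcontent a (A n) + ennreal (e / 2 ^ Suc n)"
    by metis
  define V where "V m = case_prod U (prod_decode m)" for m
  have "(\<Union>n. A n) \<subseteq> (\<Union>m. V m)"
  proof
    fix x assume "x \<in> (\<Union>n. A n)"
    then obtain n i where "x \<in> U n i" using U(1) by blast
    then have "x \<in> V (prod_encode (n,i))" unfolding V_def by simp
    then show "x \<in> (\<Union>m. V m)" by blast
  qed
  moreover have "\<And>m. bounded (V m)" unfolding V_def using U(2) by (simp add: case_prod_beta)
  ultimately have "hcontent a (\<Union>n. A n) \<le> (\<Sum>m. ennreal (diameter (V m) powr a))"
    by (rule hcontent_le_cover)
  also have "\<dots> = (\<Sum>n. \<Sum>i. ennreal (diameter (U n i) powr a))"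
    unfolding V_def
    by (rule suminf_ennreal_2dimen[where f = "\<lambda>p. ennreal (diameter (case_prod U p) powr a)"]) simp
  also have "\<dots> \<le> (\<Sum>n. hcontent a (A n) + ennreal (e / 2 ^ Suc n))"
    by (rule suminf_le) (use U(3) in \<open>auto intro: less_imp_le\<close>)
  also have "\<dots> = (\<Sum>n. hcontent a (A n)) + (\<Sum>n. ennreal (e / 2 ^ Suc n))"
    by (rule suminf_add[symmetric]) auto
  also have "(\<Sum>n. ennreal (e / 2 ^ Suc n)) = ennreal e"
  proof -
    have "(\<lambda>n. e / 2 ^ Suc n) sums e"
      using power_half_series sums_mult[of "\<lambda>n. (1/2::real)^Suc n" 1 e]
      by (simp add: power_divide)
    then show ?thesis using e by (simp add: suminf_ennreal2 sums_iff)
  qed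
  finally show "hcontent a (\<Union>n. A n) \<le> (\<Sum>n. hcontent a (A n)) + ennreal e" .
qed

lemma hcontent_Un: "hcontent a (A \<union> B) \<le> hcontent a A + hcontent a B"
proof -
  define C where "C n = (if n = 0 then A else if n = 1 then B else {})" for n :: nat
  have "A \<union> B = (\<Union>n. C n)" unfolding C_def by (auto split: if_splits)
  then have "hcontent a (A \<union> B) \<le> (\<Sum>n. hcontent a (C n))" using hcontent_Union by simp
  also have "\<dots> = (\<Sum>n\<in>{0,1}. hcontent a (C n))" by (rule suminf_finite) (auto simp: C_def)
  finally show ?thesis by (simp add: C_def)
qed

text \<open>A cover of small content has pieces of small diameter, hence content zero
  forces Hausdorff measure zero; contrapositively, \<open>\<H>\<^sup>a(A) > 0\<close> gives positive content.\<close>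
lemma hcontent_pos_if_hausdorff_pos:
  assumes a: "0 < a" and pos: "hausdorff_h (\<lambda>x. x powr a) A > 0"
  shows "hcontent a A > 0"
proof (rule ccontr)
  assume "\<not> hcontent a A > 0"
  then have c: "hcontent a A = 0" by (simp only: not_gr_zero)
  define Hd where "Hd d = (INF U\<in>{U. A \<subseteq> (\<Union>i. U i) \<and> (\<forall>i. bounded (U i) \<and> diameter (U i) < d)}.
          (\<Sum>i. ennreal (diameter (U i) powr a)))" for d
  have small: "Hd d \<le> 0 + ennreal e" if d: "d > 0" and e: "e > 0" for d e
  proof -
    define e' where "e' = min e (d powr a)"
    have "hcontent a A < ennreal e'" using c e d by (simp add: e'_def)
    then obtain U where U: "A \<subseteq> (\<Union>i. U i)" "\<And>i. bounded (U i)"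
        "(\<Sum>i. ennreal (diameter (U i) powr a)) < ennreal e'"
      unfolding hcontent_def INF_less_iff by auto
    have "diameter (U i) < d" for i
    proof (rule ccontr)
      assume "\<not> diameter (U i) < d"
      then have "ennreal (d powr a) \<le> ennreal (diameter (U i) powr a)"
        using a d by (intro ennreal_leI powr_mono2) auto
      also have "\<dots> \<le> (\<Sum>i. ennreal (diameter (U i) powr a))"
        by (rule ennreal_term_le_suminf)
      also have "\<dots> < ennreal e'" by (rule U(3))
      finally have "d powr a < e'" by (simp add: ennreal_less_iff)
      then show False by (simp add: e'_def)
    qed
    then have "Hd d \<le> (\<Sum>i. ennreal (diameter (U i) powr a))"
      unfolding Hd_def using U(1,2) by (intro INF_lower) auto
    also have "\<dots> \<le> ennreal e'" using U(3) by (rule less_imp_le)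
    also have "\<dots> \<le> ennreal e" by (rule ennreal_leI) (simp add: e'_def)
    finally show ?thesis by simp
  qed
  have "Hd d \<le> 0" if "d > 0" for d
    by (rule ennreal_le_epsilon) (rule small[OF that])
  then have "hausdorff_h (\<lambda>x. x powr a) A = 0"
    unfolding hausdorff_h_def Hd_def[symmetric] by simp
  then show False using pos by simp
qed

lemma hcontent_le_dist_bound:
  fixes Q :: "'a::real_normed_vector set"
  assumes dist: "\<And>x y. x \<in> Q \<Longrightarrow> y \<in> Q \<Longrightarrow> dist x y \<le> r" and "0 \<le> r" "0 < a"
  shows "hcontent a Q \<le> ennreal (r powr a)"
proof (cases "Q = {}")
  case False
  then obtain x0 where "x0 \<in> Q" by blast
  then have bQ: "bounded Q" unfolding bounded_def using dist by blast
  have "diameter Q \<le> r"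
    using dist \<open>0 \<le> r\<close> by (intro diameter_le) (auto simp: dist_norm)
  then have "diameter Q powr a \<le> r powr a"
    using assms diameter_ge_0[OF bQ] by (intro powr_mono2) auto
  then show ?thesis using hcontent_le_diameter[OF bQ, of a] by (meson ennreal_leI order_trans)
qed simp

lemma hcontent_sphere_finite:
  fixes M :: "'a::real_normed_vector set"
  assumes "M \<subseteq> sphere 0 1" "0 < b" "b \<le> 1"
  shows "hcontent b M = ennreal (enn2real (hcontent b M))" "enn2real (hcontent b M) \<le> 2"
proof -
  have "dist x y \<le> 2" if "x \<in> M" "y \<in> M" for x y
  proof -
    have "norm x = 1" "norm y = 1" using assms(1) that by auto
    then show ?thesis using norm_triangle_ineq4[of x y] by (simp add: dist_norm)
  qed
  then have "hcontent b M \<le> ennreal (2 powr b)"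
    using assms by (intro hcontent_le_dist_bound) auto
  also have "2 powr b \<le> 2 powr 1" using assms by (intro powr_mono) auto
  then have "ennreal (2 powr b) \<le> ennreal 2" by (intro ennreal_leI) simp
  finally have le2: "hcontent b M \<le> ennreal 2" .
  then have "hcontent b M \<noteq> top" by (auto simp: top_unique)
  then show "hcontent b M = ennreal (enn2real (hcontent b M))" by (simp add: ennreal_enn2real_if)
  show "enn2real (hcontent b M) \<le> 2" using enn2real_mono[OF le2] by simp
qed

text \<open>The unit circle is cut into four arcs according
  to which coordinate dominates and its sign; on each arc the other coordinate is
  cut into intervals of length \<open>d\<close>.\<close>
definition direction_cell :: "real \<Rightarrow> real^2 \<Rightarrow> bool \<times> bool \<times> int" where
  "direction_cell d e =
     (if \<bar>e$2\<bar> \<le> \<bar>e$1\<bar> then (True, 0 \<le> e$1, \<lfloor>e$2 / d\<rfloor>) else (False, 0 \<le> e$2, \<lfloor>e$1 / d\<rfloor>))"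

lemma norm_vec2: "norm (x::real^2) = sqrt ((x$1)^2 + (x$2)^2)"
  by (simp add: norm_vec_def L2_set_def sum_2)

lemma arc_coordinate_dist:
  fixes a b a' b' \<delta> :: real
  assumes "a^2 + b^2 = 1" "a'^2 + b'^2 = 1" "\<bar>b\<bar> \<le> \<bar>a\<bar>" "\<bar>b'\<bar> \<le> \<bar>a'\<bar>"
    "(0 \<le> a) = (0 \<le> a')" "\<bar>b - b'\<bar> \<le> \<delta>"
  shows "(a - a')^2 + (b - b')^2 \<le> 2 * \<delta>^2"
proof -
  have eq: "(a - a') * (a + a') = (b' - b) * (b' + b)"
    using assms(1,2) by (simp add: algebra_simps power2_eq_square)
  have s: "\<bar>a + a'\<bar> = \<bar>a\<bar> + \<bar>a'\<bar>" using assms(5) by (auto simp: abs_if)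
  have bb: "\<bar>b' + b\<bar> \<le> \<bar>a + a'\<bar>" using s assms(3,4) by linarith
  have "\<bar>a - a'\<bar> \<le> \<bar>b - b'\<bar>"
  proof (cases "a + a' = 0")
    case False
    have "\<bar>a - a'\<bar> * \<bar>a + a'\<bar> = \<bar>b - b'\<bar> * \<bar>b' + b\<bar>"
      using eq by (metis abs_minus_commute abs_mult)
    also have "\<dots> \<le> \<bar>b - b'\<bar> * \<bar>a + a'\<bar>" using bb by (simp add: mult_left_mono)
    finally show ?thesis using False by simp
  qed (use s in simp)
  then have "(a - a')^2 \<le> (b - b')^2" by (metis abs_ge_zero power2_abs power_mono)
  moreover have "(b - b')^2 \<le> \<delta>^2" using assms(6) by (metis abs_ge_zero power2_abs power_mono)
  ultimately show ?thesis by linarith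
qed

lemma floor_eq_imp_dist:
  assumes "\<lfloor>x / d\<rfloor> = \<lfloor>y / d\<rfloor>" "(d::real) > 0"
  shows "\<bar>x - y\<bar> \<le> d"
proof -
  have "(of_int \<lfloor>x / d\<rfloor> :: real) = of_int \<lfloor>y / d\<rfloor>" using assms(1) by simp
  then have "\<bar>x / d - y / d\<bar> < 1"
    using of_int_floor_le[of "x/d"] of_int_floor_le[of "y/d"]
      real_of_int_floor_add_one_gt[of "x/d"] real_of_int_floor_add_one_gt[of "y/d"]
    by linarith
  then have "\<bar>x - y\<bar> / d < 1" by (simp add: diff_divide_distrib[symmetric] abs_div_pos assms(2))
  then show ?thesis using assms(2) by (simp add: divide_less_eq)
qed

lemma direction_cell_dist:
  assumes "norm e = 1" "norm e' = 1" "direction_cell d e = direction_cell d e'" "d > 0"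
  shows "dist e e' \<le> 2 * d"
proof -
  have u: "(e$1)^2 + (e$2)^2 = 1" "(e'$1)^2 + (e'$2)^2 = 1"
    using assms(1,2) by (simp_all add: norm_vec2)
  have "(e$1 - e'$1)^2 + (e$2 - e'$2)^2 \<le> 2 * d^2"
  proof (cases "\<bar>e$2\<bar> \<le> \<bar>e$1\<bar>")
    case True
    then have "\<bar>e'$2\<bar> \<le> \<bar>e'$1\<bar>" "(0 \<le> e$1) = (0 \<le> e'$1)" "\<lfloor>e$2 / d\<rfloor> = \<lfloor>e'$2 / d\<rfloor>"
      using assms(3) by (auto simp: direction_cell_def split: if_splits)
    then show ?thesis
      using arc_coordinate_dist[of "e$1" "e$2" "e'$1" "e'$2" d] floor_eq_imp_dist assms(4) u True
      by simp
  next
    case False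
    then have "\<not> \<bar>e'$2\<bar> \<le> \<bar>e'$1\<bar>" "(0 \<le> e$2) = (0 \<le> e'$2)" "\<lfloor>e$1 / d\<rfloor> = \<lfloor>e'$1 / d\<rfloor>"
      using assms(3) by (auto simp: direction_cell_def split: if_splits)
    then show ?thesis
      using arc_coordinate_dist[of "e$2" "e$1" "e'$2" "e'$1" d] floor_eq_imp_dist assms(4) u False
      by (simp add: add.commute)
  qed
  also have "\<dots> \<le> (2 * d)^2" by (simp add: power2_eq_square)
  finally have "sqrt ((e$1 - e'$1)^2 + (e$2 - e'$2)^2) \<le> 2 * d"
    using assms(4) real_le_lsqrt by simp
  then show ?thesis by (simp add: dist_norm norm_vec2)
qed

definition floor_range :: "real \<Rightarrow> real \<Rightarrow> int set" where
  "floor_range lo hi = {\<lfloor>lo\<rfloor>..\<lfloor>hi\<rfloor>}"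

lemma card_floor_range:
  assumes "lo \<le> hi"
  shows "real (card (floor_range lo hi)) \<le> hi - lo + 2"
proof -
  have "\<lfloor>lo\<rfloor> \<le> \<lfloor>hi\<rfloor>" using assms by (rule floor_mono)
  then have "real (card (floor_range lo hi)) = real_of_int (\<lfloor>hi\<rfloor> - \<lfloor>lo\<rfloor> + 1)"
    by (simp add: floor_range_def)
  also have "\<dots> \<le> hi - lo + 2"
    using of_int_floor_le[of hi] real_of_int_floor_add_one_gt[of lo]
    by (simp only: of_int_add of_int_diff of_int_1)
  finally show ?thesis .
qed

lemma floor_in_floor_range:
  assumes "\<bar>x - v\<bar> \<le> R" "(d::real) > 0"
  shows "\<lfloor>x / d\<rfloor> \<in> floor_range ((v - R) / d) ((v + R) / d)"
  using assms by (auto simp: floor_range_def intro!: floor_mono divide_right_mono)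

definition cells_near :: "real \<Rightarrow> real^2 \<Rightarrow> real \<Rightarrow> (bool \<times> bool \<times> int) set" where
  "cells_near d v R = UNIV \<times> UNIV \<times>
     (floor_range ((v$1 - R) / d) ((v$1 + R) / d) \<union> floor_range ((- v$1 - R) / d) ((- v$1 + R) / d) \<union>
      floor_range ((v$2 - R) / d) ((v$2 + R) / d) \<union> floor_range ((- v$2 - R) / d) ((- v$2 + R) / d))"

text \<open>Each coordinate of a direction near \<open>\<plusminus>v\<close> is near \<open>\<plusminus>\<close> the corresponding coordinate of
  \<open>v\<close>, which pins down its cell index.\<close>
lemma direction_cell_in_cells_near:
  assumes "norm (e - v) \<le> R \<or> norm (e + v) \<le> R" "d > 0"
  shows "direction_cell d e \<in> cells_near d v R"
proof -
  have "\<bar>e$i - v$i\<bar> \<le> R \<or> \<bar>e$i - (- v$i)\<bar> \<le> R" for i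
    using assms(1) component_le_norm_cart[of "e - v" i] component_le_norm_cart[of "e + v" i] by auto
  then have "\<lfloor>e$i / d\<rfloor> \<in> floor_range ((v$i - R) / d) ((v$i + R) / d) \<union>
                          floor_range ((- v$i - R) / d) ((- v$i + R) / d)" for i
    using floor_in_floor_range assms(2) by blast
  then show ?thesis unfolding cells_near_def direction_cell_def by auto
qed

lemma finite_cells_near: "finite (cells_near d v R)"
  by (simp add: cells_near_def floor_range_def)

lemma card_cells_near:
  assumes "R \<ge> 0" "d > 0"
  shows "real (card (cells_near d v R)) \<le> 32 * R / d + 32"
proof -
  define J where "J c = floor_range ((c - R) / d) ((c + R) / d)" for c
  have J: "real (card (J c)) \<le> 2 * R / d + 2" for c
  proof -
    have "(c - R) / d \<le> (c + R) / d" using assms by (auto intro!: divide_right_mono)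
    then have "real (card (J c)) \<le> (c + R) / d - (c - R) / d + 2"
      unfolding J_def by (rule card_floor_range)
    also have "(c + R) / d - (c - R) / d = 2 * R / d" by (simp add: diff_divide_distrib[symmetric])
    finally show ?thesis .
  qed
  define S where "S = J (v$1) \<union> J (- v$1) \<union> J (v$2) \<union> J (- v$2)"
  have "real (card S) \<le>
      real (card (J (v$1))) + real (card (J (- v$1))) + real (card (J (v$2))) + real (card (J (- v$2)))"
    unfolding S_def of_nat_add[symmetric] of_nat_le_iff by (intro card_Un_le[THEN order_trans] add_mono order_refl)
  also have "\<dots> \<le> 4 * (2 * R / d + 2)"
    using add_mono[OF add_mono[OF add_mono[OF J J] J] J] by simp
  finally have "real (card S) \<le> 4 * (2 * R / d + 2)" .
  moreover have "card (cells_near d v R) = 4 * card S"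
    unfolding cells_near_def J_def[symmetric] S_def by (simp add: card_cartesian_product)
  ultimately show ?thesis by simp
qed

lemma finite_direction_cells:
  assumes "M \<subseteq> sphere 0 1" "d > 0"
  shows "finite (direction_cell d ` M)"
proof (rule finite_subset)
  show "direction_cell d ` M \<subseteq> cells_near d 0 1"
  proof
    fix k assume "k \<in> direction_cell d ` M"
    then obtain e where e: "e \<in> M" "k = direction_cell d e" by blast
    then have "norm (e - 0) \<le> 1" using assms(1) by auto
    then show "k \<in> cells_near d 0 1" using e assms(2) direction_cell_in_cells_near by blast
  qed
qed (rule finite_cells_near)

lemma hcontent_le_direction_cells:
  assumes "M \<subseteq> sphere 0 1" "d > 0" "0 < b"
  shows "hcontent b M \<le> ennreal (real (card (direction_cell d ` M)) * (2 * d) powr b)"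
proof -
  let ?cell = "\<lambda>k. {e\<in>M. direction_cell d e = k}"
  have bd: "bounded (?cell k)" for k
    by (rule bounded_subset[OF bounded_cball]) (use assms sphere_cball in blast)
  have "hcontent b M \<le> (\<Sum>k\<in>direction_cell d ` M. ennreal (diameter (?cell k) powr b))"
    by (rule hcontent_le_finite_cover[OF finite_direction_cells[OF assms(1,2)] _ bd]) auto
  also have "\<dots> \<le> (\<Sum>k\<in>direction_cell d ` M. ennreal ((2 * d) powr b))"
  proof (rule sum_mono)
    fix k
    have "diameter (?cell k) \<le> 2 * d"
    proof (rule diameter_le)
      fix x y assume "x \<in> ?cell k" "y \<in> ?cell k"
      then have "norm x = 1" "norm y = 1" "direction_cell d x = direction_cell d y"
        using assms(1) by auto
      then show "norm (x - y) \<le> 2 * d"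
        using assms(2) direction_cell_dist[of x y d] by (simp add: dist_norm)
    qed (use assms in simp)
    then show "ennreal (diameter (?cell k) powr b) \<le> ennreal ((2 * d) powr b)"
      using assms diameter_ge_0[OF bd[of k]] by (intro ennreal_leI powr_mono2) auto
  qed
  also have "\<dots> = ennreal (real (card (direction_cell d ` M)) * (2 * d) powr b)"
    by (simp add: ennreal_of_nat_eq_real_of_nat ennreal_mult)
  finally show ?thesis .
qed

lemma segment_position:
  fixes a e x :: "'a::real_inner"
  assumes e: "norm e = 1" and x: "x \<in> closed_segment a (a + t *\<^sub>R e)" and t: "0 \<le> t"
  shows "x = a + inner (x - a) e *\<^sub>R e" "0 \<le> inner (x - a) e" "inner (x - a) e \<le> t"
proof -
  obtain u where u: "0 \<le> u" "u \<le> 1" "x = a + (u * t) *\<^sub>R e"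
    using x unfolding in_segment by (auto simp: algebra_simps)
  have "inner e e = 1" using e by (simp add: dot_square_norm)
  then have p: "inner (x - a) e = u * t" by (simp add: u(3))
  show "x = a + inner (x - a) e *\<^sub>R e" using u(3) p by simp
  show "0 \<le> inner (x - a) e" using p u t by simp
  show "inner (x - a) e \<le> t" using p mult_left_le_one_le[OF t u(1,2)] by simp
qed

lemma segment_dist:
  fixes a e x y :: "'a::real_inner"
  assumes e: "norm e = 1" and t: "0 \<le> t"
    and "x \<in> closed_segment a (a + t *\<^sub>R e)" "y \<in> closed_segment a (a + t *\<^sub>R e)"
  shows "dist x y = \<bar>inner (x - a) e - inner (y - a) e\<bar>"
proof -
  have "x - y = (inner (x - a) e - inner (y - a) e) *\<^sub>R e"
    using segment_position(1)[OF e _ t] assms(3,4) by (metis add_diff_cancel_left scaleR_diff_left)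
  then show ?thesis using e by (simp add: dist_norm)
qed

lemma ennreal_add4_less:
  fixes A B C D :: ennreal
  assumes "A < ennreal a" "B \<le> ennreal b" "C \<le> ennreal c" "D < ennreal d" "0 \<le> b" "0 \<le> c"
  shows "A + B + C + D < ennreal (a + b + c + d)"
proof -
  obtain p where p: "A = ennreal p" "0 \<le> p" "p < a"
    using assms(1) by (cases A rule: ennreal_cases) (auto simp: ennreal_less_iff)
  obtain q where q: "D = ennreal q" "0 \<le> q" "q < d"
    using assms(4) by (cases D rule: ennreal_cases) (auto simp: ennreal_less_iff)
  obtain b' where b: "B = ennreal b'" "0 \<le> b'" "b' \<le> b"
    using assms(2,5) by (cases B rule: ennreal_cases) (auto simp: top_unique)
  obtain c' where c: "C = ennreal c'" "0 \<le> c'" "c' \<le> c"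
    using assms(3,6) by (cases C rule: ennreal_cases) (auto simp: top_unique)
  have "A + B + C + D = ennreal (p + b' + c' + q)" using p q b c by simp
  also have "\<dots> < ennreal (a + b + c + d)" using p q b c by (intro ennreal_lessI) auto
  finally show ?thesis .
qed

lemma first_crossing:
  fixes f :: "nat \<Rightarrow> 'a::linorder"
  assumes "f 0 < c" "c \<le> f j"
  obtains m where "f m < c" "c \<le> f (Suc m)"
proof -
  define j0 where "j0 = (LEAST j. c \<le> f j)"
  have j0: "c \<le> f j0" unfolding j0_def by (rule LeastI[of _ j]) (rule assms(2))
  then obtain m where m: "j0 = Suc m" using assms(1) by (cases j0) auto
  have "f m < c" using not_less_Least[of m "\<lambda>j. c \<le> f j"] m by (auto simp: j0_def not_le)
  then show ?thesis using that j0 m by blast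
qed

lemma hcontent_position_window:
  fixes X :: "'a::real_normed_vector set"
  assumes dist: "\<And>x y. x \<in> X \<Longrightarrow> y \<in> X \<Longrightarrow> dist x y = \<bar>pos x - pos y\<bar>" and "0 < r" "0 < al"
  shows "hcontent al {x\<in>X. s \<le> pos x \<and> pos x < s + r} \<le> ennreal (r powr al)"
proof (rule hcontent_le_dist_bound)
  fix x y assume "x \<in> {x\<in>X. s \<le> pos x \<and> pos x < s + r}" "y \<in> {x\<in>X. s \<le> pos x \<and> pos x < s + r}"
  then show "dist x y \<le> r" using dist by (simp add: abs_le_iff)
qed (use assms in auto)

text \<open>Cut \<open>[0, t]\<close> into consecutive windows
  of length \<open>r\<close>; let the left part be the shortest initial union of windows of content
  \<open>\<ge> \<tau>/3\<close>, discard the next window, and take the rest as the right part: the two windows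
  in between carry content at most \<open>\<tau>/6\<close> each, so the right part keeps content \<open>\<ge> \<tau>/3\<close>.\<close>
lemma split_line_set:
  fixes X :: "'a::real_normed_vector set"
  assumes distX: "\<And>x y. x \<in> X \<Longrightarrow> y \<in> X \<Longrightarrow> dist x y = \<bar>pos x - pos y\<bar>"
    and posX: "\<And>x. x \<in> X \<Longrightarrow> 0 \<le> pos x \<and> pos x \<le> t"
    and al: "0 < al" and tau: "0 < tau" and cX: "ennreal tau \<le> hcontent al X"
    and r: "0 < r" "r powr al \<le> tau / 6"
  shows "\<exists>XL XR. XL \<subseteq> X \<and> XR \<subseteq> X \<and> ennreal (tau/3) \<le> hcontent al XL \<and>
           ennreal (tau/3) \<le> hcontent al XR \<and> (\<forall>x\<in>XL. \<forall>y\<in>XR. r \<le> dist x y)"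
proof -
  define P where "P j = {x\<in>X. pos x < real j * r}" for j :: nat
  define Q where "Q s = {x\<in>X. s \<le> pos x \<and> pos x < s + r}" for s
  have "t \<le> real (nat \<lceil>t / r\<rceil>) * r"
    using real_nat_ceiling_ge[of "t / r"] r by (simp add: pos_divide_le_eq)
  then have "t < real (nat \<lceil>t / r\<rceil> + 1) * r" using r by (simp add: distrib_right)
  then have "P (nat \<lceil>t / r\<rceil> + 1) = X" unfolding P_def using posX by force
  moreover have "ennreal (tau/3) \<le> ennreal tau" using tau by (intro ennreal_leI) simp
  ultimately have large: "ennreal (tau/3) \<le> hcontent al (P (nat \<lceil>t / r\<rceil> + 1))"
    using cX by simp
  have "P 0 = {}" unfolding P_def using posX by force
  then have small: "hcontent al (P 0) < ennreal (tau/3)" using tau by simp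
  obtain m where m: "hcontent al (P m) < ennreal (tau/3)" "ennreal (tau/3) \<le> hcontent al (P (Suc m))"
    using first_crossing[of "\<lambda>j. hcontent al (P j)", OF small large] by blast
  define XR where "XR = {x\<in>X. (real m + 2) * r \<le> pos x}"
  have short: "hcontent al (Q s) \<le> ennreal (tau/6)" for s
    using hcontent_position_window[OF distX r(1) al, where s = s] ennreal_leI[OF r(2)]
    unfolding Q_def by (rule order_trans)
  have "X \<subseteq> P m \<union> Q (real m * r) \<union> Q (real m * r + r) \<union> XR"
    unfolding P_def Q_def XR_def by (auto simp: algebra_simps)
  then have "hcontent al X \<le> hcontent al (P m \<union> Q (real m * r) \<union> Q (real m * r + r) \<union> XR)"
    by (rule hcontent_mono)
  with cX have "ennreal tau \<le> hcontent al (P m \<union> Q (real m * r) \<union> Q (real m * r + r) \<union> XR)"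
    by (rule order_trans)
  also have "\<dots> \<le> hcontent al (P m) + hcontent al (Q (real m * r)) + hcontent al (Q (real m * r + r))
      + hcontent al XR"
    by (intro hcontent_Un[THEN order_trans] add_right_mono) simp
  also have "\<dots> \<le> hcontent al (P m) + ennreal (tau/6) + ennreal (tau/6) + hcontent al XR"
    by (intro add_mono short order_refl)
  finally have total: "ennreal tau \<le> hcontent al (P m) + ennreal (tau/6) + ennreal (tau/6) + hcontent al XR" .
  have cXR: "ennreal (tau/3) \<le> hcontent al XR"
  proof (rule ccontr)
    assume "\<not> ?thesis"
    then have "hcontent al (P m) + ennreal (tau/6) + ennreal (tau/6) + hcontent al XR
        < ennreal (tau/3 + tau/6 + tau/6 + tau/3)"
      using m(1) tau by (intro ennreal_add4_less) auto
    also have "tau/3 + tau/6 + tau/6 + tau/3 = tau" by simp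
    finally show False using total leD by blast
  qed
  show ?thesis
  proof (intro exI conjI ballI)
    show "P (Suc m) \<subseteq> X" "XR \<subseteq> X" unfolding P_def XR_def by auto
    fix x y assume "x \<in> P (Suc m)" "y \<in> XR"
    then show "r \<le> dist x y" using distX by (auto simp: P_def XR_def algebra_simps)
  qed (fact m(2) cXR)+
qed

lemma split_segment:
  fixes a e :: "'a::real_inner"
  assumes e: "norm e = 1" and X: "X \<subseteq> closed_segment a (a + t *\<^sub>R e)" and t: "0 \<le> t"
    and al: "0 < al" and tau: "0 < tau" and cX: "ennreal tau \<le> hcontent al X"
    and r: "0 < r" "r powr al \<le> tau / 6"
  shows "\<exists>XL XR. XL \<subseteq> X \<and> XR \<subseteq> X \<and> ennreal (tau/3) \<le> hcontent al XL \<and>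
           ennreal (tau/3) \<le> hcontent al XR \<and> (\<forall>x\<in>XL. \<forall>y\<in>XR. r \<le> dist x y)"
proof (rule split_line_set[OF _ _ al tau cX r])
  show "dist x y = \<bar>inner (x - a) e - inner (y - a) e\<bar>" if "x \<in> X" "y \<in> X" for x y
    using segment_dist[OF e t] X that by auto
  show "0 \<le> inner (x - a) e \<and> inner (x - a) e \<le> t" if "x \<in> X" for x
    using segment_position(2,3)[OF e _ t] X that by auto
qed

lemma split_segments:
  fixes A :: "'a::real_inner \<Rightarrow> 'a"
  assumes M: "M \<subseteq> sphere 0 1" and T: "\<And>e. e \<in> M \<Longrightarrow> 0 \<le> T e"
    and al: "0 < al" and tau: "0 < tau"
    and cM: "\<And>e. e \<in> M \<Longrightarrow> ennreal tau \<le> hcontent al (closed_segment (A e) (A e + T e *\<^sub>R e) \<inter> Y)"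
    and r: "0 < r" "r powr al \<le> tau / 6"
  shows "\<exists>XL XR. \<forall>e\<in>M.
      XL e \<union> XR e \<subseteq> closed_segment (A e) (A e + T e *\<^sub>R e) \<inter> Y \<and>
      ennreal (tau/3) \<le> hcontent al (XL e) \<and> ennreal (tau/3) \<le> hcontent al (XR e) \<and>
      (\<forall>x\<in>XL e. \<forall>y\<in>XR e. r \<le> dist x y)"
proof -
  define good where "good e X X' \<longleftrightarrow>
      X \<union> X' \<subseteq> closed_segment (A e) (A e + T e *\<^sub>R e) \<inter> Y \<and>
      ennreal (tau/3) \<le> hcontent al X \<and> ennreal (tau/3) \<le> hcontent al X' \<and>
      (\<forall>x\<in>X. \<forall>y\<in>X'. r \<le> dist x y)" for e X X'
  have "\<forall>e\<in>M. \<exists>p. good e (fst p) (snd p)"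
  proof
    fix e assume e: "e \<in> M"
    then have "norm e = 1" using M by auto
    from split_segment[OF this Int_lower1 T[OF e] al tau cM[OF e] r]
    obtain X X' where "X \<subseteq> closed_segment (A e) (A e + T e *\<^sub>R e) \<inter> Y"
      "X' \<subseteq> closed_segment (A e) (A e + T e *\<^sub>R e) \<inter> Y" "ennreal (tau/3) \<le> hcontent al X"
      "ennreal (tau/3) \<le> hcontent al X'" "\<forall>x\<in>X. \<forall>y\<in>X'. r \<le> dist x y"
      by blast
    then have "good e (fst (X, X')) (snd (X, X'))" by (simp add: good_def)
    then show "\<exists>p. good e (fst p) (snd p)" ..
  qed
  then obtain p where "\<forall>e\<in>M. good e (fst (p e)) (snd (p e))" by (rule bchoice[THEN exE])
  then show ?thesis
    by (intro exI[of _ "\<lambda>e. fst (p e)"] exI[of _ "\<lambda>e. snd (p e)"]) (simp add: good_def)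
qed

lemma normalize_dist:
  fixes w u :: "'a::real_normed_vector"
  assumes "w \<noteq> 0"
  shows "norm (w /\<^sub>R norm w - u /\<^sub>R norm u) \<le> 2 * norm (w - u) / norm w"
proof (cases "u = 0")
  case False
  have nw: "norm w > 0" using assms by simp
  have nu: "norm u > 0" using False by simp
  have "w /\<^sub>R norm w - u /\<^sub>R norm u = (w - u) /\<^sub>R norm w + (inverse (norm w) - inverse (norm u)) *\<^sub>R u"
    by (simp add: algebra_simps)
  then have "norm (w /\<^sub>R norm w - u /\<^sub>R norm u)
      \<le> norm ((w - u) /\<^sub>R norm w) + norm ((inverse (norm w) - inverse (norm u)) *\<^sub>R u)"
    by (metis norm_triangle_ineq)
  also have "norm ((w - u) /\<^sub>R norm w) = norm (w - u) / norm w"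
    using nw by (simp add: divide_inverse mult.commute)
  also have "norm ((inverse (norm w) - inverse (norm u)) *\<^sub>R u) = \<bar>norm u - norm w\<bar> / norm w"
  proof -
    have "(inverse (norm w) - inverse (norm u)) * norm u = (norm u - norm w) / norm w"
      using nw nu by (simp add: field_simps)
    then have "\<bar>inverse (norm w) - inverse (norm u)\<bar> * norm u = \<bar>(norm u - norm w) / norm w\<bar>"
      by (metis abs_mult abs_of_pos nu)
    then show ?thesis using nw by simp
  qed
  also have "\<bar>norm u - norm w\<bar> / norm w \<le> norm (w - u) / norm w"
    using norm_triangle_ineq3[of u w] nw by (simp add: norm_minus_commute divide_right_mono)
  finally show ?thesis by simp
qed (use assms in simp)

lemma pair_direction:
  fixes e a x x' y y' :: "'a::real_inner"
  assumes e: "norm e = 1" and t: "0 \<le> t"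
    and x: "x \<in> closed_segment a (a + t *\<^sub>R e)" "x' \<in> closed_segment a (a + t *\<^sub>R e)"
    and r: "0 < r" "r \<le> dist x x'" and dy: "dist x y \<le> d" "dist x' y' \<le> d"
  shows "norm (e - (y' - y) /\<^sub>R norm (y' - y)) \<le> 4 * d / r \<or>
         norm (e + (y' - y) /\<^sub>R norm (y' - y)) \<le> 4 * d / r"
proof -
  define s where "s = inner (x' - a) e - inner (x - a) e"
  define w where "w = x' - x"
  define v where "v = (y' - y) /\<^sub>R norm (y' - y)"
  have w: "w = s *\<^sub>R e"
    unfolding w_def s_def
    by (subst segment_position(1)[OF e x(1) t], subst segment_position(1)[OF e x(2) t])
       (simp add: algebra_simps)
  have rw: "r \<le> norm w" using r by (simp add: w_def dist_norm norm_minus_commute)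
  have eq: "w - (y' - y) = (x' - y') - (x - y)" by (simp add: w_def algebra_simps)
  have "norm (w - (y' - y)) \<le> norm (x' - y') + norm (x - y)"
    unfolding eq by (rule norm_triangle_ineq4)
  also have "\<dots> \<le> 2 * d" using dy by (simp add: dist_norm)
  finally have wu: "norm (w - (y' - y)) \<le> 2 * d" .
  have "norm (w /\<^sub>R norm w - v) \<le> 2 * norm (w - (y' - y)) / norm w"
    unfolding v_def using rw r by (intro normalize_dist) auto
  also have "\<dots> \<le> 2 * (2 * d) / norm w" using wu rw r by (simp add: divide_right_mono)
  also have "\<dots> \<le> 4 * d / r"
  proof -
    have "0 \<le> d" using dy(1) zero_le_dist order_trans by metis
    then show ?thesis using rw r by (simp add: frac_le)
  qed
  finally have main: "norm (w /\<^sub>R norm w - v) \<le> 4 * d / r" .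
  have nw: "norm w = \<bar>s\<bar>" using e by (simp add: w)
  then have "s \<noteq> 0" using rw r by auto
  then have "w /\<^sub>R norm w = e \<or> w /\<^sub>R norm w = - e"
    unfolding nw by (cases "0 < s") (simp_all add: w)
  then show ?thesis
    unfolding v_def[symmetric]
  proof
    assume "w /\<^sub>R norm w = e"
    then show "norm (e - v) \<le> 4 * d / r \<or> norm (e + v) \<le> 4 * d / r" using main by simp
  next
    assume "w /\<^sub>R norm w = - e"
    then have "norm (- e - v) \<le> 4 * d / r" using main by simp
    moreover have "norm (e + v) = norm (- e - v)"
      using norm_minus_cancel[of "e + v"] by (simp add: algebra_simps)
    ultimately show "norm (e - v) \<le> 4 * d / r \<or> norm (e + v) \<le> 4 * d / r" by simp
  qed
qed

lemma many_pieces_meet: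
  fixes U :: "'i \<Rightarrow> 'a::metric_space set"
  assumes I: "finite I" and Y: "Y \<subseteq> (\<Union>i\<in>I. U i)"
    and U: "\<And>i. i \<in> I \<Longrightarrow> bounded (U i) \<and> diameter (U i) \<le> d" and al: "0 < al"
    and big: "ennreal s \<le> hcontent al Y"
  shows "s \<le> real (card {i\<in>I. U i \<inter> Y \<noteq> {}}) * d powr al"
proof -
  have cover: "Y \<subseteq> (\<Union>i\<in>{i\<in>I. U i \<inter> Y \<noteq> {}}. U i)" using Y by blast
  have "hcontent al Y \<le> (\<Sum>i\<in>{i\<in>I. U i \<inter> Y \<noteq> {}}. ennreal (diameter (U i) powr al))"
    by (rule hcontent_le_finite_cover[OF _ cover]) (use I U in auto)
  also have "\<dots> \<le> (\<Sum>i\<in>{i\<in>I. U i \<inter> Y \<noteq> {}}. ennreal (d powr al))"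
    using U al diameter_ge_0 by (intro sum_mono ennreal_leI powr_mono2) auto
  also have "\<dots> = ennreal (real (card {i\<in>I. U i \<inter> Y \<noteq> {}}) * d powr al)"
    by (simp add: ennreal_of_nat_eq_real_of_nat ennreal_mult)
  finally have "hcontent al Y \<le> ennreal (real (card {i\<in>I. U i \<inter> Y \<noteq> {}}) * d powr al)" .
  with big have "ennreal s \<le> ennreal (real (card {i\<in>I. U i \<inter> Y \<noteq> {}}) * d powr al)"
    by (rule order_trans)
  then show ?thesis by simp
qed

lemma double_counting:
  assumes I: "finite I" and K: "finite K" and sub: "\<And>k. k \<in> K \<Longrightarrow> IL k \<subseteq> I \<and> IR k \<subseteq> I"
    and B: "\<And>i j. i \<in> I \<Longrightarrow> j \<in> I \<Longrightarrow> real (card {k\<in>K. i \<in> IL k \<and> j \<in> IR k}) \<le> B"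
  shows "(\<Sum>k\<in>K. real (card (IL k)) * real (card (IR k))) \<le> real (card I)^2 * B"
proof -
  have "(\<Sum>k\<in>K. real (card (IL k)) * real (card (IR k)))
      = (\<Sum>k\<in>K. \<Sum>p\<in>I \<times> I. if fst p \<in> IL k \<and> snd p \<in> IR k then 1 else 0)"
  proof (rule sum.cong)
    fix k assume "k \<in> K"
    then have "IL k \<times> IR k = {p\<in>I \<times> I. fst p \<in> IL k \<and> snd p \<in> IR k}" using sub by auto
    then show "real (card (IL k)) * real (card (IR k)) =
        (\<Sum>p\<in>I \<times> I. if fst p \<in> IL k \<and> snd p \<in> IR k then 1 else 0)"
      using I by (simp add: sum.If_cases Int_def conj_commute flip: card_cartesian_product of_nat_mult)
  qed simp
  also have "\<dots> = (\<Sum>p\<in>I \<times> I. real (card {k\<in>K. fst p \<in> IL k \<and> snd p \<in> IR k}))"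
    using K by (subst sum.swap) (simp add: sum.If_cases Int_def conj_commute)
  also have "\<dots> \<le> (\<Sum>p\<in>I \<times> I. B)" using B by (intro sum_mono) auto
  also have "\<dots> = real (card I)^2 * B" by (simp add: card_cartesian_product power2_eq_square)
  finally show ?thesis .
qed

lemma incidence_counting:
  assumes I: "finite I" and K: "finite K" and sub: "\<And>k. k \<in> K \<Longrightarrow> IL k \<subseteq> I \<and> IR k \<subseteq> I"
    and low: "\<And>k. k \<in> K \<Longrightarrow> s \<le> real (card (IL k)) * w \<and> s \<le> real (card (IR k)) * w"
    and s: "0 \<le> s"
    and B: "\<And>i j. i \<in> I \<Longrightarrow> j \<in> I \<Longrightarrow> real (card {k\<in>K. i \<in> IL k \<and> j \<in> IR k}) \<le> B"
  shows "real (card K) * s^2 \<le> real (card I)^2 * B * w^2"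
proof -
  have "(\<Sum>k\<in>K. s^2) \<le> (\<Sum>k\<in>K. (real (card (IL k)) * real (card (IR k))) * w^2)"
  proof (rule sum_mono)
    fix k assume k: "k \<in> K"
    have "s * s \<le> (real (card (IL k)) * w) * (real (card (IR k)) * w)"
      using low[OF k] s by (intro mult_mono) auto
    then show "s^2 \<le> (real (card (IL k)) * real (card (IR k))) * w^2"
      by (simp add: power2_eq_square mult_ac)
  qed
  also have "\<dots> = (\<Sum>k\<in>K. real (card (IL k)) * real (card (IR k))) * w^2"
    by (simp add: sum_distrib_right)
  also have "\<dots> \<le> real (card I)^2 * B * w^2"
    by (intro mult_right_mono double_counting[OF I K sub B]) auto
  finally show ?thesis by simp
qed

text \<open>The directions whose left part meets \<open>V\<close> and
  whose right part meets \<open>W\<close> lie within \<open>4d/r\<close> of \<open>\<plusminus>v\<close>, where \<open>v\<close> is the direction from \<open>V\<close>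
  to \<open>W\<close>; hence they occupy at most \<open>O(1/r)\<close> cells of size \<open>d\<close>.\<close>
lemma few_cells_through_two_pieces:
  fixes V W :: "(real^2) set"
  assumes V: "bounded V" "diameter V \<le> d" and W: "bounded W" "diameter W \<le> d"
    and d: "0 < d" and r: "0 < r" "r \<le> 1" and M: "M \<subseteq> sphere 0 1" and T: "\<And>e. e \<in> M \<Longrightarrow> 0 \<le> T e"
    and X: "\<And>e. e \<in> M \<Longrightarrow> XL e \<union> XR e \<subseteq> closed_segment (A e) (A e + T e *\<^sub>R e) \<and>
                            (\<forall>x\<in>XL e. \<forall>y\<in>XR e. r \<le> dist x y)"
  shows "real (card (direction_cell d ` {e\<in>M. V \<inter> XL e \<noteq> {} \<and> W \<inter> XR e \<noteq> {}})) \<le> 160 / r"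
proof (cases "{e\<in>M. V \<inter> XL e \<noteq> {} \<and> W \<inter> XR e \<noteq> {}} = {}")
  case False
  then obtain y y' where y: "y \<in> V" "y' \<in> W" by blast
  define v where "v = (y' - y) /\<^sub>R norm (y' - y)"
  have "direction_cell d ` {e\<in>M. V \<inter> XL e \<noteq> {} \<and> W \<inter> XR e \<noteq> {}} \<subseteq> cells_near d v (4 * d / r)"
  proof
    fix k assume "k \<in> direction_cell d ` {e\<in>M. V \<inter> XL e \<noteq> {} \<and> W \<inter> XR e \<noteq> {}}"
    then obtain e x x' where e: "e \<in> M" "k = direction_cell d e" and x: "x \<in> V \<inter> XL e" "x' \<in> W \<inter> XR e"
      by blast
    have "norm e = 1" using M e(1) by auto
    moreover have "dist x y \<le> d" "dist x' y' \<le> d"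
      using diameter_bounded_bound[OF V(1) _ y(1), of x] diameter_bounded_bound[OF W(1) _ y(2), of x']
        V(2) W(2) x by auto
    ultimately have "norm (e - v) \<le> 4 * d / r \<or> norm (e + v) \<le> 4 * d / r"
      unfolding v_def using X[OF e(1)] T[OF e(1)] x r(1)
      by (intro pair_direction[where a = "A e" and t = "T e"]) auto
    then show "k \<in> cells_near d v (4 * d / r)" using e d direction_cell_in_cells_near by blast
  qed
  then have "real (card (direction_cell d ` {e\<in>M. V \<inter> XL e \<noteq> {} \<and> W \<inter> XR e \<noteq> {}}))
      \<le> real (card (cells_near d v (4 * d / r)))"
    by (intro of_nat_mono card_mono finite_cells_near)
  also have "\<dots> \<le> 32 * (4 * d / r) / d + 32" using d r by (intro card_cells_near) auto
  also have "\<dots> \<le> 160 / r" using d r by (simp add: field_simps)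
  finally show ?thesis .
next
  case True
  then show ?thesis using r by (subst True) simp
qed

text \<open>Split each such part into two far apart halves; each half meets
  \<open>\<ge> \<tau>/(3d\<^sup>\<alpha>)\<close> pieces, so every occupied direction cell carries \<open>\<ge> (\<tau>/(3d\<^sup>\<alpha>))\<^sup>2\<close> pairs of
  pieces, while a pair of pieces is shared by \<open>O(1/r)\<close> cells only.\<close>
lemma incidence_bound:
  fixes U :: "'i \<Rightarrow> (real^2) set"
  assumes I: "finite I" and U: "\<And>i. i \<in> I \<Longrightarrow> bounded (U i) \<and> diameter (U i) \<le> d"
    and d: "0 < d" and al: "0 < al" and M: "M \<subseteq> sphere 0 1" and T: "\<And>e. e \<in> M \<Longrightarrow> 0 \<le> T e"
    and cM: "\<And>e. e \<in> M \<Longrightarrow>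
       ennreal tau \<le> hcontent al (closed_segment (A e) (A e + T e *\<^sub>R e) \<inter> (\<Union>i\<in>I. U i))"
    and tau: "0 < tau" "tau \<le> 1"
  shows "real (card (direction_cell d ` M)) * (tau/3)^2
           \<le> real (card I)^2 * (160 / (tau/6) powr (1/al)) * d powr (2*al)"
proof -
  define r where "r = (tau/6) powr (1/al)"
  have r: "0 < r" "r \<le> 1" "r powr al \<le> tau/6"
    using tau al powr_mono2[of "1/al" "tau/6" 1] by (auto simp: r_def powr_powr)
  obtain XL XR where X: "\<forall>e\<in>M.
      XL e \<union> XR e \<subseteq> closed_segment (A e) (A e + T e *\<^sub>R e) \<inter> (\<Union>i\<in>I. U i) \<and>
      ennreal (tau/3) \<le> hcontent al (XL e) \<and> ennreal (tau/3) \<le> hcontent al (XR e) \<and>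
      (\<forall>x\<in>XL e. \<forall>y\<in>XR e. r \<le> dist x y)"
    using split_segments[OF M T al tau(1) cM r(1,3)] by blast
  have halves: "XL e \<union> XR e \<subseteq> closed_segment (A e) (A e + T e *\<^sub>R e) \<and>
      (\<forall>x\<in>XL e. \<forall>y\<in>XR e. r \<le> dist x y)" if "e \<in> M" for e
    using X that by blast
  define K where "K = direction_cell d ` M"
  define rep where "rep k = (SOME e. e \<in> M \<and> direction_cell d e = k)" for k
  have rep: "rep k \<in> M \<and> direction_cell d (rep k) = k" if "k \<in> K" for k
    using someI_ex[of "\<lambda>e. e \<in> M \<and> direction_cell d e = k"] that by (auto simp: K_def rep_def)
  define IL where "IL k = {i\<in>I. U i \<inter> XL (rep k) \<noteq> {}}" for k
  define IR where "IR k = {i\<in>I. U i \<inter> XR (rep k) \<noteq> {}}" for k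
  have many: "tau/3 \<le> real (card (IL k)) * d powr al \<and> tau/3 \<le> real (card (IR k)) * d powr al"
    if k: "k \<in> K" for k
  proof -
    have "rep k \<in> M" using rep[OF k] by simp
    then show ?thesis
      unfolding IL_def IR_def using X by (intro conjI many_pieces_meet[OF I _ U al]) auto
  qed
  have shared: "real (card {k\<in>K. i \<in> IL k \<and> j \<in> IR k}) \<le> 160 / r" if "i \<in> I" "j \<in> I" for i j
  proof -
    let ?N = "{e\<in>M. U i \<inter> XL e \<noteq> {} \<and> U j \<inter> XR e \<noteq> {}}"
    have "{k\<in>K. i \<in> IL k \<and> j \<in> IR k} \<subseteq> direction_cell d ` ?N"
    proof
      fix k assume k: "k \<in> {k\<in>K. i \<in> IL k \<and> j \<in> IR k}"
      then have "rep k \<in> ?N" using rep by (auto simp: IL_def IR_def)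
      moreover have "k = direction_cell d (rep k)" using rep k by auto
      ultimately show "k \<in> direction_cell d ` ?N" by blast
    qed
    then have "card {k\<in>K. i \<in> IL k \<and> j \<in> IR k} \<le> card (direction_cell d ` ?N)"
      using finite_direction_cells[of ?N d] M d by (intro card_mono) auto
    also have "real (card (direction_cell d ` ?N)) \<le> 160 / r"
      by (rule few_cells_through_two_pieces[where A = A, OF _ _ _ _ d r(1,2) M T halves])
        (use U that in auto)
    finally show ?thesis by simp
  qed
  have "real (card K) * (tau/3)^2 \<le> real (card I)^2 * (160 / r) * (d powr al)^2"
    using finite_direction_cells[OF M d] many tau
    by (intro incidence_counting[OF I _ _ _ _ shared]) (auto simp: K_def IL_def IR_def)
  then show ?thesis by (simp add: K_def r_def power2_eq_square powr_add[symmetric])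
qed

lemma direction_content_bound:
  fixes U :: "'i \<Rightarrow> (real^2) set"
  assumes I: "finite I" and U: "\<And>i. i \<in> I \<Longrightarrow> bounded (U i) \<and> diameter (U i) \<le> d"
    and d: "0 < d" and al: "0 < al" and M: "M \<subseteq> sphere 0 1" and T: "\<And>e. e \<in> M \<Longrightarrow> 0 \<le> T e"
    and cM: "\<And>e. e \<in> M \<Longrightarrow>
       ennreal tau \<le> hcontent al (closed_segment (A e) (A e + T e *\<^sub>R e) \<inter> (\<Union>i\<in>I. U i))"
    and tau: "0 < tau" "tau \<le> 1" and b: "0 < b"
  shows "enn2real (hcontent b M)
           \<le> real (card I)^2 * (1440 * 6 powr (1/al) * 2 powr b) * d powr (2*al + b) / tau powr (2 + 1/al)"
proof -
  have "enn2real (hcontent b M) \<le> real (card (direction_cell d ` M)) * (2 * d) powr b"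
    using enn2real_mono[OF hcontent_le_direction_cells[OF M d b]] by simp
  also have "real (card (direction_cell d ` M))
      \<le> real (card I)^2 * (160 / (tau/6) powr (1/al)) * d powr (2*al) / (tau/3)^2"
  proof -
    have "0 < (tau/3)^2" using tau by simp
    then show ?thesis using incidence_bound[OF I U d al M T cM tau] by (simp only: pos_le_divide_eq)
  qed
  then have "real (card (direction_cell d ` M)) * (2 * d) powr b
      \<le> real (card I)^2 * (160 / (tau/6) powr (1/al)) * d powr (2*al) / (tau/3)^2 * (2 * d) powr b"
    by (rule mult_right_mono) simp
  also have "\<dots> = real (card I)^2 * (1440 * 6 powr (1/al) * 2 powr b) * d powr (2*al + b)
                   / tau powr (2 + 1/al)"
  proof -
    have "tau powr (2 + 1/al) = (tau/3)^2 * 9 * tau powr (1/al)"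
      using tau by (simp add: powr_add power2_eq_square)
    moreover have "(tau/6) powr (1/al) = tau powr (1/al) / 6 powr (1/al)"
      using tau by (simp add: powr_divide)
    ultimately show ?thesis
      using tau d by (simp add: powr_mult powr_add field_simps)
  qed
  finally show ?thesis .
qed

lemma threshold_power:
  fixes c K al th :: real
  assumes "0 < c" "0 < K" "0 < al"
  shows "(c * K powr (- (th / (1 + 1/(2*al))))) powr (2 + 1/al) = c powr (2 + 1/al) * K powr (- 2 * th)"
proof -
  define p where "p = 1 + 1/(2*al)"
  have "0 < p" using assms(3) by (simp add: p_def add_pos_pos)
  moreover have "2 + 1/al = 2 * p" using assms(3) by (simp add: p_def field_simps)
  ultimately have "- (th / (1 + 1/(2*al))) * (2 + 1/al) = - 2 * th" by (simp add: p_def[symmetric])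
  then show ?thesis using assms by (simp add: powr_mult powr_powr)
qed

lemma dyadic_gauge_square:
  fixes C b al th :: real and k :: nat
  shows "(C * (2 powr (-(real k + 1))) powr (b/2 + al) * ln (1 / 2 powr (-(real k + 1))) powr th)^2
     = C^2 * 2 powr (-(2*al+b)) * ln 2 powr (2*th) * (2 powr (- real k)) powr (2*al + b)
       * (real k + 1) powr (2*th)"
proof -
  have "1 / 2 powr (-(real k + 1)) = 2 powr (real k + 1)"
    unfolding powr_minus by (simp only: divide_inverse inverse_inverse_eq mult_1)
  then have ln: "ln (1 / 2 powr (-(real k + 1))) = (real k + 1) * ln 2" by simp
  have sq: "(y powr e)^2 = y powr (2 * e)" if "0 < y" for y e :: real
    using that by (simp add: power2_eq_square powr_add[symmetric])
  have "(2 powr (-(real k + 1))) powr (2 * (b/2 + al)) = 2 powr (-(2*al+b)) * (2 powr (- real k)) powr (2*al + b)"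
    by (simp add: powr_powr powr_add[symmetric] algebra_simps)
  then show ?thesis
    unfolding ln by (simp add: power_mult_distrib sq powr_mult mult_ac)
qed

lemma square_root_bound:
  fixes m q z :: real
  assumes "0 \<le> m" "m \<le> 2" "0 \<le> q" "0 \<le> z" "q * m \<le> z^2"
  shows "sqrt (q / 2) * m \<le> z"
proof (rule power2_le_imp_le)
  have "(sqrt (q / 2) * m)^2 = q / 2 * m^2" using assms(3) by (simp add: power_mult_distrib)
  also have "\<dots> = q * (m * m) / 2" by (simp add: power2_eq_square)
  also have "\<dots> \<le> q * (2 * m) / 2"
    using assms(1-3) mult_right_mono[OF assms(2,1)] by (intro divide_right_mono mult_left_mono) auto
  also have "\<dots> = q * m" by simp
  finally show "(sqrt (q / 2) * m)^2 \<le> z^2" using assms(5) by linarith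
qed (rule assms(4))

text \<open>The constant \<open>\<kappa>\<close> relating, at every dyadic level, the content of the captured
  directions to the cost of the pieces of that level.\<close>
definition level_constant :: "real \<Rightarrow> real \<Rightarrow> real \<Rightarrow> real \<Rightarrow> real \<Rightarrow> real" where
  "level_constant al b th C c =
     sqrt (C^2 * 2 powr (-(2*al+b)) * ln 2 powr (2*th) * c powr (2 + 1/al)
           / (2880 * 6 powr (1/al) * 2 powr b))"

lemma level_constant_pos: "0 < C \<Longrightarrow> 0 < c \<Longrightarrow> 0 < level_constant al b th C c"
  by (simp add: level_constant_def)

text \<open>Bound at one dyadic level \<open>k\<close>: if the pieces of diameter \<open>\<le> 2\<^sup>-\<^sup>k\<close> capture content
  \<open>\<ge> t\<^sub>k\<close> of the segment of every direction in \<open>M\<close>, then \<open>\<kappa> \<H>\<^sup>b\<^sub>\<infinity>(M) \<le> |I| h(2\<^sup>-\<^sup>k\<^sup>-\<^sup>1)\<close>; this is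
  where the lower bound on the gauge \<open>h\<close> enters.\<close>
lemma level_bound:
  fixes U :: "'i \<Rightarrow> (real^2) set" and k :: nat
  assumes I: "finite I" and U: "\<And>i. i \<in> I \<Longrightarrow> bounded (U i) \<and> diameter (U i) \<le> 2 powr (- real k)"
    and al: "0 < al" and b: "0 < b" "b \<le> 1" and M: "M \<subseteq> sphere 0 1"
    and T: "\<And>e. e \<in> M \<Longrightarrow> 0 \<le> T e"
    and cM: "\<And>e. e \<in> M \<Longrightarrow> ennreal (c * (real k + 1) powr (- (th / (1 + 1/(2*al)))))
                 \<le> hcontent al (closed_segment (A e) (A e + T e *\<^sub>R e) \<inter> (\<Union>i\<in>I. U i))"
    and c: "0 < c" "c * (real k + 1) powr (- (th / (1 + 1/(2*al)))) \<le> 1" and C: "0 < C"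
    and H: "C * (2 powr (-(real k + 1))) powr (b/2 + al) * ln (1 / 2 powr (-(real k + 1))) powr th \<le> H"
  shows "level_constant al b th C c * enn2real (hcontent b M) \<le> real (card I) * H"
proof -
  define t where "t = c * (real k + 1) powr (- (th / (1 + 1/(2*al))))"
  define d where "d = 2 powr (- real k)"
  define m where "m = enn2real (hcontent b M)"
  define q where "q = C^2 * 2 powr (-(2*al+b)) * ln 2 powr (2*th) * c powr (2 + 1/al)
                      / (1440 * 6 powr (1/al) * 2 powr b)"
  have t: "0 < t" "t \<le> 1" using c by (simp_all add: t_def)
  have H0: "0 \<le> H"
    using H C order_trans[OF _ H] by (simp add: less_imp_le)
  have "m \<le> real (card I)^2 * (1440 * 6 powr (1/al) * 2 powr b) * d powr (2*al + b)
              / t powr (2 + 1/al)"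
    unfolding m_def by (rule direction_content_bound[where U = U and d = d and A = A, OF I _ _ al M T _ t b(1)])
      (use U cM in \<open>auto simp: d_def t_def\<close>)
  then have "q * m \<le> q * (real (card I)^2 * (1440 * 6 powr (1/al) * 2 powr b) * d powr (2*al + b)
                      / t powr (2 + 1/al))"
    by (rule mult_left_mono) (simp add: q_def)
  also have "\<dots> = real (card I)^2 * (C^2 * 2 powr (-(2*al+b)) * ln 2 powr (2*th)
                    * d powr (2*al + b) * (real k + 1) powr (2*th))"
  proof -
    have "t powr (2 + 1/al) = c powr (2 + 1/al) / (real k + 1) powr (2 * th)"
      unfolding t_def using threshold_power[OF c(1) _ al, of "real k + 1" th]
      by (simp add: powr_minus_divide)
    then have tp: "c powr (2 + 1/al) = t powr (2 + 1/al) * (real k + 1) powr (2 * th)"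
      by (simp add: field_simps)
    show ?thesis unfolding q_def tp using t(1) by (simp add: field_simps)
  qed
  also have "\<dots> = (real (card I) *
      (C * (2 powr (-(real k + 1))) powr (b/2 + al) * ln (1 / 2 powr (-(real k + 1))) powr th))^2"
    unfolding d_def by (simp only: power_mult_distrib[of "real (card I)"] dyadic_gauge_square)
  also have "\<dots> \<le> (real (card I) * H)^2"
    using H C by (intro power_mono mult_left_mono) auto
  finally have "sqrt (q / 2) * m \<le> real (card I) * H"
    using hcontent_sphere_finite(2)[OF M b] H0 by (intro square_root_bound) (auto simp: m_def q_def)
  moreover have "sqrt (q / 2) = level_constant al b th C c"
    by (simp add: q_def level_constant_def)
  ultimately show ?thesis by (simp add: m_def)
qed

lemma gauge_nonneg: "h \<in> gauge_class \<Longrightarrow> 0 \<le> y \<Longrightarrow> 0 \<le> h y"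
  unfolding gauge_class_def by blast

lemma gauge_mono: "h \<in> gauge_class \<Longrightarrow> 0 \<le> y \<Longrightarrow> y \<le> z \<Longrightarrow> h y \<le> h z"
  unfolding gauge_class_def by (auto elim!: mono_onD)

lemma small_cover_of_null_set:
  fixes E :: "'a::metric_space set"
  assumes E0: "hausdorff_h h E = 0" and d: "0 < d" and ep: "0 < ep" and h: "h \<in> gauge_class"
  obtains U where "E \<subseteq> (\<Union>i. U i)" "\<And>i. bounded (U i)" "\<And>i. diameter (U i) < d"
    "summable (\<lambda>i. h (diameter (U i)))" "(\<Sum>i. h (diameter (U i))) < ep"
proof -
  have "(INF U\<in>{U. E \<subseteq> (\<Union>i. U i) \<and> (\<forall>i. bounded (U i) \<and> diameter (U i) < d)}.
           (\<Sum>i. ennreal (h (diameter (U i))))) \<le> hausdorff_h h E"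
    unfolding hausdorff_h_def by (rule SUP_upper) (use d in simp)
  then have "(INF U\<in>{U. E \<subseteq> (\<Union>i. U i) \<and> (\<forall>i. bounded (U i) \<and> diameter (U i) < d)}.
           (\<Sum>i. ennreal (h (diameter (U i))))) < ennreal ep"
    using E0 ep by simp
  then obtain U where U: "E \<subseteq> (\<Union>i. U i)" "\<And>i. bounded (U i)" "\<And>i. diameter (U i) < d"
      "(\<Sum>i. ennreal (h (diameter (U i)))) < ennreal ep"
    unfolding INF_less_iff by blast
  have hn: "0 \<le> h (diameter (U i))" for i using gauge_nonneg[OF h diameter_ge_0[OF U(2)]] .
  have sm: "summable (\<lambda>i. h (diameter (U i)))"
    by (rule summable_suminf_not_top[OF hn]) (use U(4) in auto)
  have "ennreal (\<Sum>i. h (diameter (U i))) < ennreal ep"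
    using U(4) suminf_ennreal2[OF hn sm] by simp
  then have "(\<Sum>i. h (diameter (U i))) < ep"
    using ennreal_less_iff[OF suminf_nonneg[OF sm hn]] by blast
  then show ?thesis using that U sm by blast
qed

lemma eventually_at_right_0_dyadic:
  assumes "eventually P (at_right (0::real))"
  obtains k1 :: nat where "\<And>y. 0 < y \<Longrightarrow> y < 2 powr (- real k1) \<Longrightarrow> P y"
proof -
  obtain x0 where x0: "0 < x0" "\<And>y. 0 < y \<Longrightarrow> y < x0 \<Longrightarrow> P y"
    using assms unfolding eventually_at_right_field by auto
  obtain k1 where "(1/2::real)^k1 < x0" using real_arch_pow_inv[OF x0(1), of "1/2"] by auto
  moreover have "2 powr (- real k1) = (1/2::real)^k1"
    by (simp add: powr_minus powr_realpow power_one_over inverse_eq_divide)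
  ultimately show ?thesis using that x0(2) by (metis less_trans)
qed

definition dyadic_level :: "real \<Rightarrow> nat" where
  "dyadic_level D = nat \<lfloor>log 2 (1/D)\<rfloor>"

lemma dyadic_level:
  assumes "0 < D" "D \<le> 1"
  shows "D \<le> 2 powr (- real (dyadic_level D))" "2 powr (- (real (dyadic_level D) + 1)) < D"
proof -
  define q where "q = log 2 (1/D)"
  have pq: "2 powr q = 1/D" unfolding q_def using assms by simp
  have "0 \<le> q" unfolding q_def using assms by simp
  then have fl: "real (dyadic_level D) = of_int \<lfloor>q\<rfloor>" by (simp add: dyadic_level_def q_def)
  have "2 powr (real (dyadic_level D)) \<le> 1/D" unfolding fl pq[symmetric] by (intro powr_mono) auto
  then show "D \<le> 2 powr (- real (dyadic_level D))"
    using assms by (simp add: powr_minus field_simps)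
  have "1/D < 2 powr (real (dyadic_level D) + 1)"
    unfolding fl pq[symmetric] by (intro powr_less_mono) linarith+
  then have "1 / 2 powr (real (dyadic_level D) + 1) < D"
    using assms by (simp add: divide_less_eq mult.commute)
  then show "2 powr (- (real (dyadic_level D) + 1)) < D" by (simp only: powr_minus_divide)
qed

lemma dyadic_level_ge:
  assumes "0 < D" "D < 2 powr (- real k1)"
  shows "k1 \<le> dyadic_level D"
proof -
  have "2 powr (real k1) < 1/D" using assms by (simp add: powr_minus field_simps)
  then have "real k1 < log 2 (1/D)" using assms by (simp add: less_log_iff)
  then show ?thesis unfolding dyadic_level_def by linarith
qed

lemma hcontent_captured_by_some_part:
  assumes X: "X \<subseteq> P0 \<union> (\<Union>k. B k)" and P0: "hcontent a P0 = 0"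
    and big: "(\<Sum>k. ennreal (t k)) < hcontent a X"
  shows "\<exists>k. ennreal (t k) \<le> hcontent a (X \<inter> B k)"
proof (rule ccontr)
  assume "\<not> ?thesis"
  then have small: "hcontent a (X \<inter> B k) \<le> ennreal (t k)" for k by (simp add: not_le less_imp_le)
  have "X \<subseteq> (X \<inter> P0) \<union> (\<Union>k. X \<inter> B k)" using X by blast
  then have "hcontent a X \<le> hcontent a (X \<inter> P0) + hcontent a (\<Union>k. X \<inter> B k)"
    by (rule order_trans[OF hcontent_mono hcontent_Un])
  also have "hcontent a (X \<inter> P0) = 0" using hcontent_mono[of "X \<inter> P0" P0 a] P0 by simp
  also have "0 + hcontent a (\<Union>k. X \<inter> B k) \<le> (\<Sum>k. hcontent a (X \<inter> B k))"
    unfolding add_0_left by (rule hcontent_Union)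
  also have "\<dots> \<le> (\<Sum>k. ennreal (t k))" using small by (intro suminf_le) auto
  finally show False using big by simp
qed

lemma hcontent_diameter_zero_pieces:
  fixes U :: "nat \<Rightarrow> 'a::metric_space set"
  assumes "\<And>i. bounded (U i)" "0 < a"
  shows "hcontent a (\<Union>i\<in>{i. diameter (U i) = 0}. U i) = 0"
proof -
  define V where "V i = (if diameter (U i) = 0 then U i else {})" for i
  have "hcontent a (\<Union>i\<in>{i. diameter (U i) = 0}. U i) \<le> (\<Sum>i. ennreal (diameter (V i) powr a))"
    using assms(1) by (intro hcontent_le_cover) (auto simp: V_def)
  also have "\<dots> = (\<Sum>i. 0)" by (rule suminf_cong) (auto simp: V_def)
  finally show ?thesis by simp
qed

lemma hcontent_uniform_lower_bound:
  assumes L: "0 < hcontent b L" and f: "\<And>e. e \<in> L \<Longrightarrow> 0 < f e"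
  obtains c0 :: real where "0 < c0" "0 < hcontent b {e\<in>L. ennreal c0 < f e}"
proof -
  define Ln where "Ln n = {e\<in>L. ennreal (1 / (real n + 1)) < f e}" for n :: nat
  have "L \<subseteq> (\<Union>n. Ln n)"
  proof
    fix e assume e: "e \<in> L"
    have "\<exists>n::nat. ennreal (1 / (real n + 1)) < f e"
    proof (cases "f e")
      case (real r)
      then have "0 < r" using f[OF e] by simp
      then obtain n :: nat where "0 < n" "inverse (real n) < r" using ex_inverse_of_nat_less by blast
      moreover have "1 / (real n + 1) \<le> inverse (real n)"
        using \<open>0 < n\<close> by (simp add: inverse_eq_divide frac_le)
      ultimately have "1 / (real n + 1) < r" by linarith
      then show ?thesis using real \<open>0 < r\<close> by (intro exI[of _ n]) (simp add: ennreal_lessI)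
    qed simp
    then show "e \<in> (\<Union>n. Ln n)" using e by (auto simp: Ln_def)
  qed
  then have sub: "hcontent b L \<le> (\<Sum>n. hcontent b (Ln n))"
    by (rule order_trans[OF hcontent_mono hcontent_Union])
  have "\<exists>n. 0 < hcontent b (Ln n)"
  proof (rule ccontr)
    assume "\<not> ?thesis"
    then have "hcontent b (Ln n) = 0" for n by simp
    then show False using sub L by simp
  qed
  then obtain n where "0 < hcontent b (Ln n)" ..
  then show ?thesis using that[of "1 / (real n + 1)"] by (simp add: Ln_def)
qed

lemma summable_thresholds:
  fixes ga c0 :: real
  assumes ga: "1 < ga" and c0: "0 < c0"
  obtains c where "0 < c" "c \<le> 1" "(\<Sum>k. ennreal (c * (real k + 1) powr (- ga))) < ennreal c0"
proof -
  have sm: "summable (\<lambda>k::nat. (real k + 1) powr (- ga))"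
    using summable_Suc_iff[THEN iffD2, OF summable_real_powr_iff[THEN iffD2]] ga
    by (simp add: add.commute)
  define S where "S = (\<Sum>k. (real k + 1) powr (- ga))"
  have S: "0 \<le> S" unfolding S_def by (rule suminf_nonneg[OF sm]) simp
  define c where "c = min 1 (c0 / (2 * (S + 1)))"
  have c: "0 < c" "c \<le> 1" using c0 S by (auto simp: c_def)
  have "(\<Sum>k. ennreal (c * (real k + 1) powr (- ga))) = ennreal (c * S)"
    using c sm by (subst suminf_ennreal2) (auto simp: S_def suminf_mult)
  also have "c * S < c0"
  proof -
    have "c * S \<le> c0 / (2 * (S + 1)) * S" using S by (intro mult_right_mono) (auto simp: c_def)
    also have "\<dots> = c0 * (S / (2 * (S + 1)))" by simp
    also have "\<dots> < c0 * 1" using c0 S by (intro mult_strict_left_mono) auto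
    finally show ?thesis by simp
  qed
  then have "ennreal (c * S) < ennreal c0" using c0 by (intro ennreal_lessI)
  finally show ?thesis using that c by blast
qed

lemma threshold_le_one:
  fixes c g :: real
  assumes "0 < c" "c \<le> 1" "0 \<le> g"
  shows "c * (real k + 1) powr (- g) \<le> 1"
proof -
  have "(real k + 1) powr (- g) \<le> (real k + 1) powr 0" using assms(3) by (intro powr_mono) auto
  then show ?thesis using assms(1,2) by (auto intro: mult_le_one)
qed

lemma F_plus_uniform_directions:
  assumes "F_plus al b E" "0 < al" "0 < b" "b \<le> 1"
  obtains M A T c0 where "M \<subseteq> sphere 0 1" "0 < enn2real (hcontent b M)" "0 < c0"
    "\<And>e. e \<in> M \<Longrightarrow> 0 < T e \<and> ennreal c0 < hcontent al (closed_segment (A e) (A e + T e *\<^sub>R e) \<inter> E)"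
proof -
  obtain L where L: "L \<subseteq> sphere 0 1" "hausdorff_h (\<lambda>x. x powr b) L > 0"
    and seg: "\<forall>e\<in>L. \<exists>a t. t > 0 \<and> hausdorff_h (\<lambda>x. x powr al) (closed_segment a (a + t *\<^sub>R e) \<inter> E) > 0"
    using assms(1) unfolding F_plus_def by blast
  obtain A where A: "\<forall>e\<in>L. \<exists>t. t > 0 \<and>
      hausdorff_h (\<lambda>x. x powr al) (closed_segment (A e) (A e + t *\<^sub>R e) \<inter> E) > 0"
    using bchoice[OF seg] by blast
  then obtain T where AT: "\<And>e. e \<in> L \<Longrightarrow>
      T e > 0 \<and> hausdorff_h (\<lambda>x. x powr al) (closed_segment (A e) (A e + T e *\<^sub>R e) \<inter> E) > 0"
    using bchoice[OF A] by blast
  have pos: "0 < hcontent al (closed_segment (A e) (A e + T e *\<^sub>R e) \<inter> E)" if "e \<in> L" for e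
    using hcontent_pos_if_hausdorff_pos[OF assms(2)] AT[OF that] by blast
  obtain c0 where c0: "0 < c0"
    "0 < hcontent b {e\<in>L. ennreal c0 < hcontent al (closed_segment (A e) (A e + T e *\<^sub>R e) \<inter> E)}"
    by (rule hcontent_uniform_lower_bound[OF hcontent_pos_if_hausdorff_pos[OF assms(3) L(2)],
          where f = "\<lambda>e. hcontent al (closed_segment (A e) (A e + T e *\<^sub>R e) \<inter> E)", OF pos])
  define M where "M = {e\<in>L. ennreal c0 < hcontent al (closed_segment (A e) (A e + T e *\<^sub>R e) \<inter> E)}"
  have "M \<subseteq> sphere 0 1" using L(1) by (auto simp: M_def)
  moreover have "0 < enn2real (hcontent b M)"
  proof -
    have "hcontent b M \<noteq> top"
      by (subst hcontent_sphere_finite(1)[OF \<open>M \<subseteq> sphere 0 1\<close> assms(3,4)]) simp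
    then show ?thesis using c0(2) by (simp add: M_def enn2real_positive_iff less_top)
  qed
  ultimately show ?thesis using that[where A = A and T = T, OF _ _ c0(1)] AT by (auto simp: M_def)
qed

definition level_pieces :: "(nat \<Rightarrow> 'a::metric_space set) \<Rightarrow> nat \<Rightarrow> nat set" where
  "level_pieces U k = {i. 0 < diameter (U i) \<and> dyadic_level (diameter (U i)) = k}"

lemma level_pieces_diameter:
  assumes "i \<in> level_pieces U k" "diameter (U i) \<le> 1"
  shows "2 powr (- (real k + 1)) < diameter (U i)" "diameter (U i) \<le> 2 powr (- real k)"
  using assms dyadic_level[of "diameter (U i)"] by (auto simp: level_pieces_def)

text \<open>A level whose pieces cost at least \<open>h(2\<^sup>-\<^sup>k\<^sup>-\<^sup>1) > 0\<close> each has finitely many pieces.\<close>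
lemma level_pieces_finite:
  assumes h: "h \<in> gauge_class" and sm: "summable (\<lambda>i. h (diameter (U i)))"
    and U: "\<And>i. bounded (U i)" "\<And>i. diameter (U i) \<le> 1" and pos: "0 < h (2 powr (- (real k + 1)))"
  shows "finite (level_pieces U k)"
proof -
  have hn: "0 \<le> h (diameter (U i))" for i using gauge_nonneg[OF h diameter_ge_0[OF U(1)]] .
  have "finite (level_pieces U k) \<and> card (level_pieces U k)
          \<le> nat \<lceil>(\<Sum>i. h (diameter (U i))) / h (2 powr (- (real k + 1)))\<rceil>"
  proof (rule finite_if_finite_subsets_card_bdd)
    fix G assume G: "G \<subseteq> level_pieces U k" "finite G"
    have "real (card G) * h (2 powr (- (real k + 1))) = (\<Sum>i\<in>G. h (2 powr (- (real k + 1))))" by simp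
    also have "\<dots> \<le> (\<Sum>i\<in>G. h (diameter (U i)))"
    proof (rule sum_mono)
      fix i assume "i \<in> G"
      then have "2 powr (- (real k + 1)) < diameter (U i)"
        using G level_pieces_diameter(1)[of i U k] U(2)[of i] by blast
      then show "h (2 powr (- (real k + 1))) \<le> h (diameter (U i))" by (intro gauge_mono[OF h]) auto
    qed
    also have "\<dots> \<le> (\<Sum>i. h (diameter (U i)))" by (rule sum_le_suminf[OF sm G(2)]) (simp add: hn)
    finally have "real (card G) \<le> (\<Sum>i. h (diameter (U i))) / h (2 powr (- (real k + 1)))"
      using pos by (simp add: pos_le_divide_eq)
    also have "\<dots> \<le> real (nat \<lceil>(\<Sum>i. h (diameter (U i))) / h (2 powr (- (real k + 1)))\<rceil>)"
      by (rule real_nat_ceiling_ge)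
    finally show "card G \<le> nat \<lceil>(\<Sum>i. h (diameter (U i))) / h (2 powr (- (real k + 1)))\<rceil>"
      by (simp only: of_nat_le_iff)
  qed
  then show ?thesis ..
qed
lemma level_pieces_cost:
  assumes h: "h \<in> gauge_class" and sm: "summable (\<lambda>i. h (diameter (U i)))"
    and U: "\<And>i. bounded (U i)" "\<And>i. diameter (U i) \<le> 1" and fin: "\<And>k. finite (level_pieces U k)"
  shows "(\<Sum>k<K. real (card (level_pieces U k)) * h (2 powr (- (real k + 1))))
           \<le> (\<Sum>i. h (diameter (U i)))"
proof -
  have "(\<Sum>k<K. real (card (level_pieces U k)) * h (2 powr (- (real k + 1))))
      \<le> (\<Sum>k<K. \<Sum>i\<in>level_pieces U k. h (diameter (U i)))"
  proof (rule sum_mono)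
    fix k
    have "(\<Sum>i\<in>level_pieces U k. h (2 powr (- (real k + 1)))) \<le> (\<Sum>i\<in>level_pieces U k. h (diameter (U i)))"
    proof (rule sum_mono)
      fix i assume "i \<in> level_pieces U k"
      then have "2 powr (- (real k + 1)) < diameter (U i)"
        using level_pieces_diameter(1)[of i U k] U(2)[of i] by blast
      then show "h (2 powr (- (real k + 1))) \<le> h (diameter (U i))" by (intro gauge_mono[OF h]) auto
    qed
    then show "real (card (level_pieces U k)) * h (2 powr (- (real k + 1)))
        \<le> (\<Sum>i\<in>level_pieces U k. h (diameter (U i)))" by simp
  qed
  also have "\<dots> = (\<Sum>i\<in>(\<Union>k<K. level_pieces U k). h (diameter (U i)))"
    by (rule sum.UNION_disjoint[symmetric]) (use fin in \<open>auto simp: level_pieces_def\<close>)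
  also have "\<dots> \<le> (\<Sum>i. h (diameter (U i)))"
    using gauge_nonneg[OF h diameter_ge_0[OF U(1)]] by (intro sum_le_suminf[OF sm]) (auto simp: fin)
  finally show ?thesis .
qed

lemma hcontent_le_sum_of_levels:
  fixes Mk :: "nat \<Rightarrow> 'a::real_normed_vector set"
  assumes M: "M \<subseteq> (\<Union>k. Mk k)" and Mk: "\<And>k. Mk k \<subseteq> sphere 0 1" and b: "0 < b" "b \<le> 1"
    and ka: "0 < ka" and level: "\<And>k. ka * enn2real (hcontent b (Mk k)) \<le> a k"
    and partial: "\<And>K. (\<Sum>k<K. a k) \<le> S"
  shows "ka * enn2real (hcontent b M) \<le> S"
proof -
  define m where "m k = enn2real (hcontent b (Mk k))" for k
  have m0: "0 \<le> m k" for k by (simp add: m_def)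
  have "(\<Sum>k<K. m k) \<le> S / ka" for K
  proof -
    have "ka * (\<Sum>k<K. m k) \<le> (\<Sum>k<K. a k)"
      unfolding sum_distrib_left m_def using level by (rule sum_mono)
    then show ?thesis using partial[of K] ka by (simp add: pos_le_divide_eq mult.commute)
  qed
  then have sm: "summable m" using m0 by (intro summableI_nonneg_bounded)
  have msum: "(\<Sum>k. m k) \<le> S / ka" by (rule suminf_le_const[OF sm]) fact
  have "hcontent b M \<le> (\<Sum>k. hcontent b (Mk k))"
    by (rule order_trans[OF hcontent_mono[OF M] hcontent_Union])
  also have "\<dots> = ennreal (\<Sum>k. m k)"
    using hcontent_sphere_finite(1)[OF Mk b] suminf_ennreal2[OF m0 sm] by (simp add: m_def)
  finally have "enn2real (hcontent b M) \<le> (\<Sum>k. m k)"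
    using suminf_nonneg[OF sm m0] by (simp add: enn2real_leI)
  then have "ka * enn2real (hcontent b M) \<le> ka * (\<Sum>k. m k)" using ka by simp
  also have "\<dots> \<le> S" using msum ka by (simp add: pos_le_divide_eq mult.commute)
  finally show ?thesis .
qed

lemma dyadic_gauge_bound:
  fixes k k1 :: nat
  assumes C: "0 < C" and k: "k1 \<le> k"
    and hlow: "\<And>y. 0 < y \<Longrightarrow> y < 2 powr (- real k1) \<Longrightarrow> C * y powr p * ln (1/y) powr th \<le> h y"
  shows "C * (2 powr (- (real k + 1))) powr p * ln (1 / 2 powr (- (real k + 1))) powr th
           \<le> h (2 powr (- (real k + 1)))"
    and "0 < h (2 powr (- (real k + 1)))"
proof -
  have "2 powr (- (real k + 1)) < 2 powr (- real k1)" using k by simp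
  then show bound: "C * (2 powr (- (real k + 1))) powr p * ln (1 / 2 powr (- (real k + 1))) powr th
           \<le> h (2 powr (- (real k + 1)))"
    by (intro hlow) auto
  have "1 / 2 powr (- (real k + 1)) = 2 powr (real k + 1)"
    unfolding powr_minus by (simp only: divide_inverse inverse_inverse_eq mult_1)
  moreover have "1 < 2 powr (real k + 1)" using powr_less_mono[of 0 "real k + 1" 2] by simp
  ultimately have "0 < ln (1 / 2 powr (- (real k + 1)))" by simp
  then have "0 < C * (2 powr (- (real k + 1))) powr p * ln (1 / 2 powr (- (real k + 1))) powr th"
    using C by simp
  then show "0 < h (2 powr (- (real k + 1)))" using bound by linarith
qed

lemma level_pieces_empty_below:
  assumes "\<And>i. diameter (U i) < 2 powr (- real k1)" "k < k1"
  shows "level_pieces U k = {}"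
proof -
  have "dyadic_level (diameter (U i)) \<noteq> k" if "0 < diameter (U i)" for i
    using dyadic_level_ge[OF that assms(1)] assms(2) by simp
  then show ?thesis unfolding level_pieces_def by blast
qed

text \<open>A segment part whose content exceeds \<open>\<Sum> t\<^sub>k\<close> has content at least \<open>t\<^sub>k\<close> inside the
  pieces of some level \<open>k\<close>; pieces of diameter zero do not count.\<close>
lemma captured_at_some_level:
  fixes U :: "nat \<Rightarrow> 'a::metric_space set"
  assumes U: "E \<subseteq> (\<Union>i. U i)" "\<And>i. bounded (U i)" and al: "0 < al"
    and big: "(\<Sum>k. ennreal (t k)) < hcontent al (S \<inter> E)"
  shows "\<exists>k. ennreal (t k) \<le> hcontent al (S \<inter> (\<Union>i\<in>level_pieces U k. U i))"
proof -
  have cover: "S \<inter> E \<subseteq> (\<Union>i\<in>{i. diameter (U i) = 0}. U i) \<union> (\<Union>k. \<Union>i\<in>level_pieces U k. U i)"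
  proof
    fix y assume "y \<in> S \<inter> E"
    then obtain i where i: "y \<in> U i" using U(1) by blast
    show "y \<in> (\<Union>i\<in>{i. diameter (U i) = 0}. U i) \<union> (\<Union>k. \<Union>i\<in>level_pieces U k. U i)"
    proof (cases "diameter (U i) = 0")
      case False
      then have "i \<in> level_pieces U (dyadic_level (diameter (U i)))"
        using diameter_ge_0[OF U(2)[of i]] by (simp add: level_pieces_def)
      then show ?thesis using i by blast
    qed (use i in blast)
  qed
  have "\<exists>k. ennreal (t k) \<le> hcontent al (S \<inter> E \<inter> (\<Union>i\<in>level_pieces U k. U i))"
    by (rule hcontent_captured_by_some_part[OF cover hcontent_diameter_zero_pieces[OF U(2) al] big])
  then obtain k where "ennreal (t k) \<le> hcontent al (S \<inter> E \<inter> (\<Union>i\<in>level_pieces U k. U i))" ..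
  also have "\<dots> \<le> hcontent al (S \<inter> (\<Union>i\<in>level_pieces U k. U i))" by (rule hcontent_mono) blast
  finally show ?thesis ..
qed

text \<open>Each direction is captured
  at some level \<open>k\<close>; the bound at one level and summation over levels give
  \<open>\<kappa> \<H>\<^sup>\<beta>\<^sub>\<infinity>(M) \<le> \<Sum> h(diam U\<^sub>i)\<close>.\<close>
lemma directions_content_le_cover_cost:
  fixes E :: "(real^2) set" and U :: "nat \<Rightarrow> (real^2) set" and k1 :: nat
  assumes al: "0 < al" and b: "0 < b" "b \<le> 1" and C: "0 < C" and th: "0 \<le> th"
    and M: "M \<subseteq> sphere 0 1"
    and seg: "\<And>e. e \<in> M \<Longrightarrow> 0 < T e \<and> ennreal c0 < hcontent al (closed_segment (A e) (A e + T e *\<^sub>R e) \<inter> E)"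
    and c: "0 < c" "c \<le> 1" "(\<Sum>k. ennreal (c * (real k + 1) powr (- (th / (1 + 1/(2*al)))))) < ennreal c0"
    and U: "E \<subseteq> (\<Union>i. U i)" "\<And>i. bounded (U i)" "\<And>i. diameter (U i) < 2 powr (- real k1)"
    and h: "h \<in> gauge_class" "summable (\<lambda>i. h (diameter (U i)))"
    and hlow: "\<And>y. 0 < y \<Longrightarrow> y < 2 powr (- real k1) \<Longrightarrow> C * y powr (b/2 + al) * ln (1/y) powr th \<le> h y"
  shows "level_constant al b th C c * enn2real (hcontent b M) \<le> (\<Sum>i. h (diameter (U i)))"
proof -
  define t where "t k = c * (real k + 1) powr (- (th / (1 + 1/(2*al))))" for k :: nat
  define Mk where "Mk k = {e\<in>M. ennreal (t k) \<le> hcontent al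
      (closed_segment (A e) (A e + T e *\<^sub>R e) \<inter> (\<Union>i\<in>level_pieces U k. U i))}" for k
  have U1: "diameter (U i) \<le> 1" for i using U(3)[of i] powr_mono[of "- real k1" 0 2] by simp
  have hx: "C * (2 powr (- (real k + 1))) powr (b/2 + al) * ln (1 / 2 powr (- (real k + 1))) powr th
      \<le> h (2 powr (- (real k + 1)))" "0 < h (2 powr (- (real k + 1)))" if "k1 \<le> k" for k
    using dyadic_gauge_bound[OF C that hlow] by blast+
  have fin: "finite (level_pieces U k)" for k
  proof (cases "k < k1")
    case False
    then show ?thesis using hx(2) by (intro level_pieces_finite[OF h U(2) U1]) simp
  qed (simp add: level_pieces_empty_below[OF U(3)])
  have t1: "t k \<le> 1" for k
    unfolding t_def using c(1,2) th al by (intro threshold_le_one) auto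
  have level: "level_constant al b th C c * enn2real (hcontent b (Mk k))
                 \<le> real (card (level_pieces U k)) * h (2 powr (- (real k + 1)))" for k
  proof (cases "k < k1")
    case True
    then show ?thesis using c(1) by (simp add: Mk_def t_def level_pieces_empty_below[OF U(3)])
  next
    case False
    show ?thesis
    proof (rule level_bound[where A = A and T = T, OF fin _ al b _ _ _ c(1) _ C])
      show "\<And>i. i \<in> level_pieces U k \<Longrightarrow> bounded (U i) \<and> diameter (U i) \<le> 2 powr - real k"
        using U(2) U1 level_pieces_diameter(2) by blast
    qed (use M seg t1 False hx(1) in \<open>auto simp: Mk_def t_def less_imp_le\<close>)
  qed
  have "M \<subseteq> (\<Union>k. Mk k)"
  proof
    fix e assume e: "e \<in> M"
    have "(\<Sum>k. ennreal (t k)) < hcontent al (closed_segment (A e) (A e + T e *\<^sub>R e) \<inter> E)"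
      using c(3) seg[OF e] unfolding t_def by (meson order.strict_trans)
    then obtain k where "ennreal (t k) \<le>
        hcontent al (closed_segment (A e) (A e + T e *\<^sub>R e) \<inter> (\<Union>i\<in>level_pieces U k. U i))"
      using captured_at_some_level[OF U(1,2) al] by blast
    then show "e \<in> (\<Union>k. Mk k)" using e by (auto simp: Mk_def)
  qed
  moreover have "Mk k \<subseteq> sphere 0 1" for k using M by (auto simp: Mk_def)
  ultimately show ?thesis
    by (rule hcontent_le_sum_of_levels[OF _ _ b level_constant_pos[OF C c(1)] level
          level_pieces_cost[OF h U(2) U1 fin]])
qed

text \<open>The exponent condition \<open>\<theta> > (1 + 2\<alpha>)/(2\<alpha>)\<close> says exactly that the threshold
  exponent \<open>\<gamma> = \<theta>/(1 + 1/(2\<alpha>))\<close> exceeds \<open>1\<close>, i.e. that the thresholds are summable.\<close>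
lemma threshold_exponent:
  fixes al th :: real
  assumes "0 < al" "(1 + 2 * al) / (2 * al) < th"
  shows "0 \<le> th" "1 < th / (1 + 1/(2*al))"
proof -
  have eq: "(1 + 2 * al) / (2 * al) = 1 + 1/(2*al)" using assms(1) by (simp add: field_simps)
  have "0 < 1 + 1/(2*al)" using assms(1) by (simp add: add_pos_pos)
  then show "0 \<le> th" "1 < th / (1 + 1/(2*al))" using assms(2) unfolding eq by simp_all
qed

theorem corollary4p4:
  fixes \<alpha> \<beta> \<theta> C :: real and E :: "(real^2) set" and h :: "real \<Rightarrow> real"
  assumes "0 < \<alpha>" "\<alpha> \<le> 1" "0 < \<beta>" "\<beta> \<le> 1"
    and "F_plus \<alpha> \<beta> E"
    and "\<theta> > (1 + 2 * \<alpha>) / (2 * \<alpha>)"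
    and "h \<in> gauge_class"
    and "C > 0"
    and "\<forall>\<^sub>F x in at_right 0. h x \<ge> C * x powr (\<beta> / 2 + \<alpha>) * (ln (1 / x)) powr \<theta>"
  shows "hausdorff_h h E > 0"
proof (rule ccontr)
  assume "\<not> hausdorff_h h E > 0"
  then have E0: "hausdorff_h h E = 0" by simp
  obtain M c0 T A where M: "M \<subseteq> sphere 0 1" "0 < enn2real (hcontent \<beta> M)" "0 < c0"
    and seg: "\<And>e. e \<in> M \<Longrightarrow> 0 < T e \<and> ennreal c0 < hcontent \<alpha> (closed_segment (A e) (A e + T e *\<^sub>R e) \<inter> E)"
    by (rule F_plus_uniform_directions[OF assms(5,1,3,4)]) blast
  obtain c where c: "0 < c" "c \<le> 1"
    "(\<Sum>k. ennreal (c * (real k + 1) powr (- (\<theta> / (1 + 1/(2*\<alpha>)))))) < ennreal c0"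
    by (rule summable_thresholds[OF threshold_exponent(2)[OF assms(1,6)] M(3)])
  obtain k1 :: nat where hlow: "\<And>y. 0 < y \<Longrightarrow> y < 2 powr (- real k1) \<Longrightarrow>
      C * y powr (\<beta> / 2 + \<alpha>) * ln (1 / y) powr \<theta> \<le> h y"
    by (rule eventually_at_right_0_dyadic[OF assms(9)]) blast
  define \<kappa>m where "\<kappa>m = level_constant \<alpha> \<beta> \<theta> C c * enn2real (hcontent \<beta> M)"
  have \<kappa>m: "0 < \<kappa>m" using level_constant_pos[OF assms(8) c(1)] M(2) by (simp add: \<kappa>m_def)
  obtain U where U: "E \<subseteq> (\<Union>i. U i)" "\<And>i. bounded (U i)" "\<And>i. diameter (U i) < 2 powr (- real k1)"
    "summable (\<lambda>i. h (diameter (U i)))" "(\<Sum>i. h (diameter (U i))) < \<kappa>m"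
    by (rule small_cover_of_null_set[where d = "2 powr (- real k1)", OF E0 _ \<kappa>m assms(7)]) (simp, blast)
  have "\<kappa>m \<le> (\<Sum>i. h (diameter (U i)))"
    unfolding \<kappa>m_def using threshold_exponent(1)[OF assms(1,6)] M(1) seg c U assms(7) hlow
    by (intro directions_content_le_cover_cost[OF assms(1,3,4,8)])
  then show False using U(5) by simp
qed

end
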